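(* Let $\Gamma$ be a finitely generated discrete group with finite symmetric generating set $Q$, let $Z\subseteq \mathrm{Sub}(\Gamma)$ be a uniformly recurrent subgroup of $\Gamma$, and let $H\in Z$. Then the groupoid $\mathcal{G}_H$ (defined in the context), equipped with its operations and topology, is an ample, minimal, Hausdorff, étale topological groupoid whose unit space $\mathcal{G}_H^0$ is homeomorphic to $Z$ (with the subspace topology from $\mathrm{Sub}(\Gamma)$).
   Context: Word length $l(\gamma)$ is taken with respect to $Q$. $\mathrm{Sub}(\Gamma)$ is the space of subgroups of $\Gamma$ with the topology of pointwise convergence of indicator functions, with $\Gamma$ acting by conjugation $\gamma.H=\gamma H\gamma^{-1}$. A uniformly recurrent subgroup (URS) is a nonempty closed $\Gamma$-invariant subset $Z\subseteq\mathrm{Sub}(\Gamma)$ on which every $\Gamma$-orbit is dense. For $H\le\Gamma$, the Schreier graph $S(H)=S_\Gamma^Q(H)$ is the rooted labeled graph with vertex set $\Gamma/H$, root $H$, and for each $\gamma H\in\Gamma/H$ and $q\in Q$ an edge from $\gamma H$ to $q\gamma H$ labeled $q$; $d$ is the shortest-path metric and $B_n(S,p)$ the ball of radius $n$ around a vertex $p$. Two rooted labeled balls are root-label isomorphic if there is a graph isomorphism between them preserving roots and labels (such an isomorphism is unique). Construction of $\mathcal{G}_H$: write $S=S(H)$. For $p\in\Gamma/H$ and $n\ge 0$ let $[p]_n$ be the root-label isomorphism class of the rooted labeled ball $(B_n(S,p),p)$, and let $E_n=\{[p]_n: p\in\Gamma/H\}$ (a finite discrete set), with maps $E_{n+1}\to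 E_n$, $[p]_{n+1}\mapsto[p]_n$. Let $\mathcal{G}_H^0=\varprojlim E_n$. For $x=(x_n)\in\mathcal{G}_H^0$ choose vertices $p_n\in\Gamma/H$ with $x_n=[p_n]_n$. The arrows of $\mathcal{G}_H$ are equivalence classes of pairs $(x,\gamma)$ with $x\in\mathcal{G}_H^0$, $\gamma\in\Gamma$, where $(x,\gamma)\sim(x,\gamma')$ iff $\gamma p_n=\gamma' p_n$ for all sufficiently large $n$ (this does not depend on the choices of $p_n$). Range $r(x,\gamma)=x$; source $s(x,\gamma)=\gamma.x$, where $(\gamma.x)_n=[\gamma p_{n+l(\gamma)}]_n$; product $(x,\gamma')(\gamma'.x,\gamma)=(x,\gamma\gamma')$; inverse $(x,\gamma)^{-1}=(\gamma.x,\gamma^{-1})$; units are $(x,e)$, identified with $x\in\mathcal{G}_H^0$. The topology on $\mathcal{G}_H$ is generated by the sets $U_{c,\gamma}=\{(x,\gamma): x_N=c\}$ for $N\in\mathbb{N}$, $c\in E_N$, $\gamma\in\Gamma$ with $l(\gamma)\le N$. Ample means étale with totally disconnected unit space; minimal means every orbit in the unit space is dense. *)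

theory Defs
  imports "HOL-Analysis.Analysis" "HOL-Algebra.Algebra"
begin

text \<open>A groupoid is given by its set of arrows A, its set of units U (a subset of A),
  range and source maps r s, a partial multiplication m (defined on pairs (a,b) with
  s a = r b, meaning a is followed by b on the left: r (m a b) = r a) and inversion i.\<close>

definition is_groupoid ::
  "'a set \<Rightarrow> 'a set \<Rightarrow> ('a \<Rightarrow> 'a) \<Rightarrow> ('a \<Rightarrow> 'a) \<Rightarrow> ('a \<Rightarrow> 'a \<Rightarrow> 'a) \<Rightarrow> ('a \<Rightarrow> 'a) \<Rightarrow> bool"
  where "is_groupoid A U r s m i \<longleftrightarrow>
     U \<subseteq> A \<and>
     (\<forall>a\<in>A. r a \<in> U \<and> s a \<in> U) \<and>
     (\<forall>u\<in>U. r u = u \<and> s u = u) \<and>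
     (\<forall>a\<in>A. \<forall>b\<in>A. s a = r b \<longrightarrow> m a b \<in> A \<and> r (m a b) = r a \<and> s (m a b) = s b) \<and>
     (\<forall>a\<in>A. \<forall>b\<in>A. \<forall>c\<in>A. s a = r b \<and> s b = r c \<longrightarrow> m (m a b) c = m a (m b c)) \<and>
     (\<forall>a\<in>A. m (r a) a = a \<and> m a (s a) = a) \<and>
     (\<forall>a\<in>A. i a \<in> A \<and> r (i a) = s a \<and> s (i a) = r a \<and> m a (i a) = r a \<and> m (i a) a = s a)"

definition composable_pairs :: "'a set \<Rightarrow> ('a \<Rightarrow> 'a) \<Rightarrow> ('a \<Rightarrow> 'a) \<Rightarrow> ('a \<times> 'a) set"
  where "composable_pairs A r s = {(a, b). a \<in> A \<and> b \<in> A \<and> s a = r b}"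

definition is_topological_groupoid ::
  "'a topology \<Rightarrow> 'a set \<Rightarrow> ('a \<Rightarrow> 'a) \<Rightarrow> ('a \<Rightarrow> 'a) \<Rightarrow> ('a \<Rightarrow> 'a \<Rightarrow> 'a) \<Rightarrow> ('a \<Rightarrow> 'a) \<Rightarrow> bool"
  where "is_topological_groupoid T U r s m i \<longleftrightarrow>
     is_groupoid (topspace T) U r s m i \<and>
     continuous_map (subtopology (prod_topology T T) (composable_pairs (topspace T) r s)) T
        (\<lambda>(a, b). m a b) \<and>
     continuous_map T T i"

definition is_etale :: "'a topology \<Rightarrow> ('a \<Rightarrow> 'a) \<Rightarrow> bool"
  where "is_etale T r \<longleftrightarrow>
     (\<forall>a\<in>topspace T. \<exists>V. openin T V \<and> a \<in> V \<and> openin T (r ` V) \<and>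
        homeomorphic_map (subtopology T V) (subtopology T (r ` V)) r)"

definition totally_disconnected_space :: "'a topology \<Rightarrow> bool"
  where "totally_disconnected_space TX \<longleftrightarrow>
     (\<forall>C. connectedin TX C \<longrightarrow> (\<forall>y\<in>C. \<forall>z\<in>C. y = z))"

definition is_ample :: "'a topology \<Rightarrow> 'a set \<Rightarrow> ('a \<Rightarrow> 'a) \<Rightarrow> bool"
  where "is_ample T U r \<longleftrightarrow> is_etale T r \<and> totally_disconnected_space (subtopology T U)"

definition is_minimal_groupoid ::
  "'a topology \<Rightarrow> 'a set \<Rightarrow> ('a \<Rightarrow> 'a) \<Rightarrow> ('a \<Rightarrow> 'a) \<Rightarrow> bool"
  where "is_minimal_groupoid T U r s \<longleftrightarrow>
     (\<forall>u\<in>U. (subtopology T U) closure_of {s a | a. a \<in> topspace T \<and> r a = u} = U)"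

definition word_prod :: "('g, 'b) monoid_scheme \<Rightarrow> 'g list \<Rightarrow> 'g"
  where "word_prod G ws = foldr (\<lambda>x y. x \<otimes>\<^bsub>G\<^esub> y) ws \<one>\<^bsub>G\<^esub>"

definition word_len :: "('g, 'b) monoid_scheme \<Rightarrow> 'g set \<Rightarrow> 'g \<Rightarrow> nat"
  where "word_len G Q g = (LEAST n. \<exists>ws. set ws \<subseteq> Q \<and> length ws = n \<and> word_prod G ws = g)"

definition Sub :: "('g, 'b) monoid_scheme \<Rightarrow> 'g set set"
  where "Sub G = {H. subgroup H G}"

text \<open>Topology of pointwise convergence of indicator functions (product topology on
  the power set of Gamma), restricted to Sub(Gamma); subbasis: cylinder sets.\<close>
definition Sub_topology :: "('g, 'b) monoid_scheme \<Rightarrow> 'g set topology"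
  where "Sub_topology G = topology_generated_by
     ({{H \<in> Sub G. g \<in> H} | g. g \<in> carrier G} \<union> {{H \<in> Sub G. g \<notin> H} | g. g \<in> carrier G})"

definition conj_sub :: "('g, 'b) monoid_scheme \<Rightarrow> 'g \<Rightarrow> 'g set \<Rightarrow> 'g set"
  where "conj_sub G g H = (\<lambda>h. g \<otimes>\<^bsub>G\<^esub> h \<otimes>\<^bsub>G\<^esub> inv\<^bsub>G\<^esub> g) ` H"

definition is_URS :: "('g, 'b) monoid_scheme \<Rightarrow> 'g set set \<Rightarrow> bool"
  where "is_URS G Z \<longleftrightarrow>
     Z \<noteq> {} \<and> Z \<subseteq> Sub G \<and> closedin (Sub_topology G) Z \<and>
     (\<forall>g\<in>carrier G. \<forall>H\<in>Z. conj_sub G g H \<in> Z) \<and>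
     (\<forall>H\<in>Z. (Sub_topology G) closure_of {conj_sub G g H | g. g \<in> carrier G} = Z)"

text \<open>Vertices of S(H): the left cosets gH; the generator q acts by p \<mapsto> q p.
  The edges are p --q--> q p for q in Q.\<close>
definition schreier_vertices :: "('g, 'b) monoid_scheme \<Rightarrow> 'g set \<Rightarrow> 'g set set"
  where "schreier_vertices G H = {g <#\<^bsub>G\<^esub> H | g. g \<in> carrier G}"

definition sball :: "('g, 'b) monoid_scheme \<Rightarrow> 'g set \<Rightarrow> nat \<Rightarrow> 'g set \<Rightarrow> 'g set set"
  where "sball G Q n p = {word_prod G ws <#\<^bsub>G\<^esub> p | ws. set ws \<subseteq> Q \<and> length ws \<le> n}"

definition ball_iso :: "('g, 'b) monoid_scheme \<Rightarrow> 'g set \<Rightarrow> nat \<Rightarrow> 'g set \<Rightarrow> 'g set \<Rightarrow> bool"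
  where "ball_iso G Q n p p' \<longleftrightarrow>
     (\<exists>f. bij_betw f (sball G Q n p) (sball G Q n p') \<and> f p = p' \<and>
        (\<forall>u\<in>sball G Q n p. \<forall>v\<in>sball G Q n p. \<forall>q\<in>Q.
            (q <#\<^bsub>G\<^esub> u = v) \<longleftrightarrow> (q <#\<^bsub>G\<^esub> f u = f v)))"

text \<open>The class [p]_n, represented by the set of all vertices of S(H) whose n-ball
  is root-label isomorphic to that of p.\<close>
definition ball_class :: "('g, 'b) monoid_scheme \<Rightarrow> 'g set \<Rightarrow> 'g set \<Rightarrow> nat \<Rightarrow> 'g set \<Rightarrow> 'g set set"
  where "ball_class G Q H n p = {p' \<in> schreier_vertices G H. ball_iso G Q n p p'}"

definition E_set :: "('g, 'b) monoid_scheme \<Rightarrow> 'g set \<Rightarrow> 'g set \<Rightarrow> nat \<Rightarrow> 'g set set set"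
  where "E_set G Q H n = ball_class G Q H n ` schreier_vertices G H"

type_synonym 'g unit_pt = "nat \<Rightarrow> 'g set set"

text \<open>Unit space: the inverse limit of the E_n along [p]_{n+1} \<mapsto> [p]_n.\<close>
definition GH0 :: "('g, 'b) monoid_scheme \<Rightarrow> 'g set \<Rightarrow> 'g set \<Rightarrow> 'g unit_pt set"
  where "GH0 G Q H = {x. (\<forall>n. x n \<in> E_set G Q H n) \<and>
     (\<forall>n. \<exists>p\<in>schreier_vertices G H. x (Suc n) = ball_class G Q H (Suc n) p \<and>
                                       x n = ball_class G Q H n p)}"

definition pick :: "'g unit_pt \<Rightarrow> nat \<Rightarrow> 'g set"
  where "pick x n = (SOME p. p \<in> x n)"

definition arr_eq :: "('g, 'b) monoid_scheme \<Rightarrow> 'g unit_pt \<Rightarrow> 'g \<Rightarrow> 'g \<Rightarrow> bool"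
  where "arr_eq G x g g' \<longleftrightarrow> (\<exists>N. \<forall>n\<ge>N. g <#\<^bsub>G\<^esub> pick x n = g' <#\<^bsub>G\<^esub> pick x n)"

text \<open>The arrow [(x,g)], represented as x together with the equivalence class of g.\<close>
definition arr :: "('g, 'b) monoid_scheme \<Rightarrow> 'g unit_pt \<Rightarrow> 'g \<Rightarrow> 'g unit_pt \<times> 'g set"
  where "arr G x g = (x, {g' \<in> carrier G. arr_eq G x g g'})"

definition GH_arrows :: "('g, 'b) monoid_scheme \<Rightarrow> 'g set \<Rightarrow> 'g set \<Rightarrow> ('g unit_pt \<times> 'g set) set"
  where "GH_arrows G Q H = {arr G x g | x g. x \<in> GH0 G Q H \<and> g \<in> carrier G}"

definition GH_units :: "('g, 'b) monoid_scheme \<Rightarrow> 'g set \<Rightarrow> 'g set \<Rightarrow> ('g unit_pt \<times> 'g set) set"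
  where "GH_units G Q H = (\<lambda>x. arr G x \<one>\<^bsub>G\<^esub>) ` GH0 G Q H"

definition uact :: "('g, 'b) monoid_scheme \<Rightarrow> 'g set \<Rightarrow> 'g set \<Rightarrow> 'g \<Rightarrow> 'g unit_pt \<Rightarrow> 'g unit_pt"
  where "uact G Q H g x = (\<lambda>n. ball_class G Q H n (g <#\<^bsub>G\<^esub> pick x (n + word_len G Q g)))"

definition arr_rep :: "('g, 'b) monoid_scheme \<Rightarrow> 'g unit_pt \<times> 'g set \<Rightarrow> 'g"
  where "arr_rep G a = (SOME g. g \<in> carrier G \<and> g \<in> snd a)"

definition GH_r :: "('g, 'b) monoid_scheme \<Rightarrow> 'g unit_pt \<times> 'g set \<Rightarrow> 'g unit_pt \<times> 'g set"
  where "GH_r G a = arr G (fst a) \<one>\<^bsub>G\<^esub>"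

definition GH_s :: "('g, 'b) monoid_scheme \<Rightarrow> 'g set \<Rightarrow> 'g set \<Rightarrow>
    'g unit_pt \<times> 'g set \<Rightarrow> 'g unit_pt \<times> 'g set"
  where "GH_s G Q H a = arr G (uact G Q H (arr_rep G a) (fst a)) \<one>\<^bsub>G\<^esub>"

definition GH_mult :: "('g, 'b) monoid_scheme \<Rightarrow>
    'g unit_pt \<times> 'g set \<Rightarrow> 'g unit_pt \<times> 'g set \<Rightarrow> 'g unit_pt \<times> 'g set"
  where "GH_mult G a b = arr G (fst a) (arr_rep G b \<otimes>\<^bsub>G\<^esub> arr_rep G a)"

definition GH_inv :: "('g, 'b) monoid_scheme \<Rightarrow> 'g set \<Rightarrow> 'g set \<Rightarrow>
    'g unit_pt \<times> 'g set \<Rightarrow> 'g unit_pt \<times> 'g set"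
  where "GH_inv G Q H a = arr G (uact G Q H (arr_rep G a) (fst a)) (inv\<^bsub>G\<^esub> arr_rep G a)"

definition GH_basic :: "('g, 'b) monoid_scheme \<Rightarrow> 'g set \<Rightarrow> 'g set \<Rightarrow>
    nat \<Rightarrow> 'g set set \<Rightarrow> 'g \<Rightarrow> ('g unit_pt \<times> 'g set) set"
  where "GH_basic G Q H N c g = {arr G x g | x. x \<in> GH0 G Q H \<and> x N = c}"

definition GH_topology :: "('g, 'b) monoid_scheme \<Rightarrow> 'g set \<Rightarrow> 'g set \<Rightarrow>
    ('g unit_pt \<times> 'g set) topology"
  where "GH_topology G Q H = topology_generated_by
     {GH_basic G Q H N c g | N c g. c \<in> E_set G Q H N \<and> g \<in> carrier G \<and> word_len G Q g \<le> N}"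

end

(* The n-ball around a vertex p of the Schreier graph is determined, up to root-label isomorphism,
   by the stabilizer of p intersected with the finite set of group elements of word length at most
   2n + 1.  Hence a unit x of G_H is the same thing as a subgroup K_x (the union of these truncated
   stabilizers).  Every K_x is a limit of conjugates Stab(gH) = gHg\<inverse>, so it lies in Z, and since
   every conjugation orbit in Z is dense every K in Z arises this way; on units the cylinder topology
   is the topology of pointwise convergence.  An arrow [(x, g)] becomes the pair (K_x, g K_x), so G_H
   is the groupoid of germs of the conjugation action on Z, and the remaining properties are read off
   the basic sets U_{c,g}: the range map is injective on each of them, they separate arrows, and
   whether a fixed element lies in K_x is locally constant in x. *)

theory Submission
  imports Defs
begin

section \<open>Stabilizers of cosets and conjugate subgroups\<close>

definition set_stabilizer :: "('g, 'b) monoid_scheme \<Rightarrow> 'g set \<Rightarrow> 'g set"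
  where "set_stabilizer G p = {h \<in> carrier G. h <#\<^bsub>G\<^esub> p = p}"

context group
begin

lemma l_coset_eq_iff:
  assumes "subgroup K G" "a \<in> carrier G" "b \<in> carrier G"
  shows "a <# K = b <# K \<longleftrightarrow> inv a \<otimes> b \<in> K"
proof
  assume "a <# K = b <# K"
  then have "b \<in> a <# K" using lcos_self[OF assms(3,1)] by simp
  then show "inv a \<otimes> b \<in> K" using subgroup.lcos_module_imp[OF assms(1) is_group assms(2)] by blast
next
  assume "inv a \<otimes> b \<in> K"
  then have "b \<in> a <# K" using subgroup.lcos_module_rev[OF assms(1) is_group assms(2,3)] by blast
  then show "a <# K = b <# K" using l_repr_independence[OF _ assms(2,1)] by blast
qed

lemma l_coset_conv:
  assumes "subgroup K G" "g \<in> carrier G"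
  shows "g <# K = {g' \<in> carrier G. inv g \<otimes> g' \<in> K}"
  using subgroup.lcos_module_imp[OF assms(1) is_group assms(2)]
    subgroup.lcos_module_rev[OF assms(1) is_group assms(2)] l_coset_carrier[OF _ assms(2,1)]
  by blast

lemma inv_mult_mem_swap:
  assumes "subgroup K G" "a \<in> carrier G" "b \<in> carrier G"
  shows "inv a \<otimes> b \<in> K \<longleftrightarrow> inv b \<otimes> a \<in> K"
  using l_coset_eq_iff[OF assms] l_coset_eq_iff[OF assms(1,3,2)] by metis

lemma l_coset_eq_iff_set_stabilizer:
  assumes "p \<subseteq> carrier G" "u \<in> carrier G" "v \<in> carrier G"
  shows "u <# p = v <# p \<longleftrightarrow> inv v \<otimes> u \<in> set_stabilizer G p"
proof
  assume "u <# p = v <# p"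
  then have "inv v <# (u <# p) = inv v <# (v <# p)" by simp
  then show "inv v \<otimes> u \<in> set_stabilizer G p"
    using assms by (simp add: set_stabilizer_def lcos_m_assoc lcos_mult_one)
next
  assume "inv v \<otimes> u \<in> set_stabilizer G p"
  then have "v <# ((inv v \<otimes> u) <# p) = v <# p" by (simp add: set_stabilizer_def)
  then show "u <# p = v <# p" using assms by (simp add: lcos_m_assoc m_assoc[symmetric])
qed

lemma subgroup_set_stabilizer:
  assumes "p \<subseteq> carrier G"
  shows "subgroup (set_stabilizer G p) G"
proof (rule subgroupI)
  show "set_stabilizer G p \<subseteq> carrier G" unfolding set_stabilizer_def by auto
  show "set_stabilizer G p \<noteq> {}" using assms lcos_mult_one by (auto simp: set_stabilizer_def)
next
  fix a b assume a: "a \<in> set_stabilizer G p" and b: "b \<in> set_stabilizer G p"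
  then show "inv a \<in> set_stabilizer G p"
    using l_coset_eq_iff_set_stabilizer[OF assms, of \<one> a] assms lcos_mult_one
    by (simp add: set_stabilizer_def)
  show "a \<otimes> b \<in> set_stabilizer G p"
    using a b assms by (auto simp: set_stabilizer_def lcos_m_assoc[symmetric])
qed

lemma mem_conj_sub_iff:
  assumes "K \<subseteq> carrier G" "g \<in> carrier G"
  shows "h \<in> conj_sub G g K \<longleftrightarrow> h \<in> carrier G \<and> inv g \<otimes> h \<otimes> g \<in> K"
proof
  assume "h \<in> conj_sub G g K"
  then obtain k where k: "k \<in> K" "h = g \<otimes> k \<otimes> inv g" unfolding conj_sub_def by auto
  then have kc: "k \<in> carrier G" using assms by auto
  have "inv g \<otimes> h \<otimes> g = k" using k kc assms by (simp add: m_assoc) (simp add: m_assoc[symmetric])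
  then show "h \<in> carrier G \<and> inv g \<otimes> h \<otimes> g \<in> K" using k kc assms by auto
next
  assume h: "h \<in> carrier G \<and> inv g \<otimes> h \<otimes> g \<in> K"
  have "h = g \<otimes> (inv g \<otimes> h \<otimes> g) \<otimes> inv g"
    using h assms by (simp add: m_assoc) (simp add: m_assoc[symmetric])
  then show "h \<in> conj_sub G g K" unfolding conj_sub_def using h by blast
qed

lemma conj_sub_closed: "K \<subseteq> carrier G \<Longrightarrow> g \<in> carrier G \<Longrightarrow> conj_sub G g K \<subseteq> carrier G"
  using mem_conj_sub_iff by blast

lemma conj_sub_one: "K \<subseteq> carrier G \<Longrightarrow> conj_sub G \<one> K = K"
  using mem_conj_sub_iff[of K \<one>] by auto

lemma conj_sub_mult:
  assumes "K \<subseteq> carrier G" "g \<in> carrier G" "h \<in> carrier G"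
  shows "conj_sub G (g \<otimes> h) K = conj_sub G g (conj_sub G h K)"
proof -
  have hK: "conj_sub G h K \<subseteq> carrier G" using conj_sub_closed assms by blast
  have "y \<in> conj_sub G (g \<otimes> h) K \<longleftrightarrow> y \<in> conj_sub G g (conj_sub G h K)" if "y \<in> carrier G" for y
  proof -
    have "inv (g \<otimes> h) \<otimes> y \<otimes> (g \<otimes> h) = inv h \<otimes> (inv g \<otimes> y \<otimes> g) \<otimes> h"
      using assms that by (simp add: inv_mult_group m_assoc)
    then show ?thesis using mem_conj_sub_iff[OF assms(1)] mem_conj_sub_iff[OF hK] that assms by simp
  qed
  then show ?thesis using conj_sub_closed assms hK by blast
qed

lemma conj_sub_self:
  assumes "subgroup K G" "k \<in> K"
  shows "conj_sub G k K = K"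
proof -
  have Kc: "K \<subseteq> carrier G" "k \<in> carrier G" using assms subgroup.subset by auto
  have "inv k \<otimes> y \<otimes> k \<in> K \<longleftrightarrow> y \<in> K" if y: "y \<in> carrier G" for y
  proof
    assume "inv k \<otimes> y \<otimes> k \<in> K"
    then have "k \<otimes> (inv k \<otimes> y \<otimes> k) \<otimes> inv k \<in> K"
      using subgroup.m_closed[OF assms(1)] subgroup.m_inv_closed[OF assms(1)] assms(2) by blast
    moreover have "k \<otimes> (inv k \<otimes> y \<otimes> k) \<otimes> inv k = y"
      using Kc y by (simp add: m_assoc) (simp add: m_assoc[symmetric])
    ultimately show "y \<in> K" by simp
  next
    assume "y \<in> K"
    then show "inv k \<otimes> y \<otimes> k \<in> K"
      using subgroup.m_closed[OF assms(1)] subgroup.m_inv_closed[OF assms(1)] assms(2) by blast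
  qed
  then show ?thesis using mem_conj_sub_iff[OF Kc] Kc by blast
qed

lemma set_stabilizer_l_coset:
  assumes "subgroup K G" "g \<in> carrier G"
  shows "set_stabilizer G (g <# K) = conj_sub G g K"
proof -
  have K: "K \<subseteq> carrier G" using subgroup.subset[OF assms(1)] .
  have "h <# (g <# K) = g <# K \<longleftrightarrow> inv g \<otimes> h \<otimes> g \<in> K" if h: "h \<in> carrier G" for h
  proof -
    have "h <# (g <# K) = g <# K \<longleftrightarrow> g <# K = (h \<otimes> g) <# K"
      using lcos_m_assoc[OF K h assms(2)] by auto
    also have "\<dots> \<longleftrightarrow> inv g \<otimes> h \<otimes> g \<in> K"
      using l_coset_eq_iff[OF assms(1,2) m_closed[OF h assms(2)]] h assms(2) by (simp add: m_assoc)
    finally show ?thesis .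
  qed
  then show ?thesis using mem_conj_sub_iff[OF K assms(2)] by (auto simp: set_stabilizer_def)
qed

end

section \<open>Word balls\<close>

locale generated_group = group G for G :: "('g, 'b) monoid_scheme" (structure) +
  fixes Q :: "'g set"
  assumes finite_gens: "finite Q"
    and gens_closed: "Q \<subseteq> carrier G"
    and gens_inv_closed: "\<forall>q\<in>Q. inv q \<in> Q"
    and generate_gens: "generate G Q = carrier G"
begin

definition words :: "nat \<Rightarrow> 'g list set"
  where "words n = {ws. set ws \<subseteq> Q \<and> length ws \<le> n}"

definition word_ball :: "nat \<Rightarrow> 'g set"
  where "word_ball n = word_prod G ` words n"

lemma word_prod_Nil [simp]: "word_prod G [] = \<one>"
  by (simp add: word_prod_def)

lemma word_prod_Cons [simp]: "word_prod G (q # ws) = q \<otimes> word_prod G ws"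
  by (simp add: word_prod_def)

lemma word_prod_closed: "set ws \<subseteq> Q \<Longrightarrow> word_prod G ws \<in> carrier G"
  using gens_closed by (induction ws) auto

lemma word_prod_append:
  "set xs \<subseteq> Q \<Longrightarrow> set ys \<subseteq> Q \<Longrightarrow> word_prod G (xs @ ys) = word_prod G xs \<otimes> word_prod G ys"
  using gens_closed by (induction xs) (auto simp: m_assoc word_prod_closed)

lemma inv_word_prod:
  "set ws \<subseteq> Q \<Longrightarrow> inv (word_prod G ws) = word_prod G (rev (map (m_inv G) ws))"
proof (induction ws)
  case (Cons q ws)
  then have q: "q \<in> carrier G" "inv q \<in> Q" using gens_closed gens_inv_closed by auto
  have "inv (word_prod G (q # ws)) = inv (word_prod G ws) \<otimes> inv q"
    using q Cons.prems word_prod_closed by (simp add: inv_mult_group)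
  also have "\<dots> = word_prod G (rev (map (m_inv G) ws) @ [inv q])"
    using Cons q gens_inv_closed by (subst word_prod_append) auto
  finally show ?case by simp
qed simp

lemma word_prod_surj:
  assumes "g \<in> carrier G"
  obtains ws where "set ws \<subseteq> Q" "word_prod G ws = g"
proof -
  have "g \<in> generate G Q" using assms generate_gens by simp
  then have "\<exists>ws. set ws \<subseteq> Q \<and> word_prod G ws = g"
  proof (induction rule: generate.induct)
    case one then show ?case by (intro exI[of _ "[]"]) simp
  next
    case (incl h) then show ?case using gens_closed by (intro exI[of _ "[h]"]) auto
  next
    case (inv h) then show ?case using gens_closed gens_inv_closed by (intro exI[of _ "[inv h]"]) auto
  next
    case (eng h1 h2)
    then obtain xs ys where "set xs \<subseteq> Q" "word_prod G xs = h1" "set ys \<subseteq> Q" "word_prod G ys = h2"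
      by blast
    then show ?case by (intro exI[of _ "xs @ ys"]) (auto simp: word_prod_append)
  qed
  then show ?thesis using that by blast
qed

lemma word_ball_closed: "word_ball n \<subseteq> carrier G"
  unfolding word_ball_def words_def using word_prod_closed by auto

lemma word_ball_mono: "m \<le> n \<Longrightarrow> word_ball m \<subseteq> word_ball n"
  unfolding word_ball_def words_def by fastforce

lemma word_ball_mult: "a \<in> word_ball m \<Longrightarrow> b \<in> word_ball n \<Longrightarrow> a \<otimes> b \<in> word_ball (m + n)"
  unfolding word_ball_def words_def
  by (auto simp: word_prod_append[symmetric] intro!: image_eqI[of _ _ "_ @ _"])

lemma inv_in_word_ball:
  assumes "a \<in> word_ball n"
  shows "inv a \<in> word_ball n"
proof -
  obtain ws where ws: "ws \<in> words n" "a = word_prod G ws" using assms unfolding word_ball_def by blast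
  then have "rev (map (m_inv G) ws) \<in> words n" using gens_inv_closed unfolding words_def by auto
  then show ?thesis using ws unfolding word_ball_def by (auto simp: inv_word_prod words_def)
qed

lemma finite_word_ball: "finite (word_ball n)"
  unfolding word_ball_def words_def using finite_lists_length_le[OF finite_gens] by simp

lemma in_word_ball_word_len: "g \<in> carrier G \<Longrightarrow> g \<in> word_ball (word_len G Q g)"
proof -
  assume "g \<in> carrier G"
  then obtain ws where ws: "set ws \<subseteq> Q" "word_prod G ws = g" by (rule word_prod_surj)
  have "\<exists>ws. set ws \<subseteq> Q \<and> length ws = word_len G Q g \<and> word_prod G ws = g"
    unfolding word_len_def by (rule LeastI[of _ "length ws"]) (use ws in blast)
  then show ?thesis unfolding word_ball_def words_def by auto
qed

lemma word_len_one: "word_len G Q \<one> = 0"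
  unfolding word_len_def by (rule Least_eq_0) (rule exI[of _ "[]"], simp)

lemma word_prod_words_closed: "ws \<in> words n \<Longrightarrow> word_prod G ws \<in> carrier G"
  unfolding words_def using word_prod_closed by auto

(* The n-ball around p records, for |a|, |b| \<le> n and q \<in> Q, whether a.p = b.p and whether
   q a.p = b.p, i.e. which of the elements b\<inverse>a and b\<inverse>qa fix p; these elements make up
   the word ball of radius 2n + 1. *)
definition window :: "nat \<Rightarrow> 'g set"
  where "window n = word_ball (2 * n + 1)"

lemma window_closed: "window n \<subseteq> carrier G"
  unfolding window_def by (rule word_ball_closed)

lemma window_mono: "m \<le> n \<Longrightarrow> window m \<subseteq> window n"
  unfolding window_def by (rule word_ball_mono) simp

lemma finite_window: "finite (window n)"
  unfolding window_def by (rule finite_word_ball)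

lemma in_window: "g \<in> carrier G \<Longrightarrow> word_len G Q g \<le> n \<Longrightarrow> g \<in> window n"
  using in_word_ball_word_len word_ball_mono[of "word_len G Q g" "2 * n + 1"]
  unfolding window_def by auto

lemma mem_window_iff_words:
  "h \<in> window n \<longleftrightarrow> (\<exists>a\<in>words (Suc n). \<exists>b\<in>words n. h = inv (word_prod G b) \<otimes> word_prod G a)"
proof
  assume "h \<in> window n"
  then obtain w where w: "w \<in> words (2 * n + 1)" "h = word_prod G w"
    unfolding window_def word_ball_def by blast
  define b where "b = rev (map (m_inv G) (take n w))"
  have tk: "set (take n w) \<subseteq> Q" "set (drop n w) \<subseteq> Q"
    using w(1) unfolding words_def by (auto dest: in_set_takeD in_set_dropD)
  have "b \<in> words n" "drop n w \<in> words (Suc n)"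
    using w(1) tk gens_inv_closed unfolding b_def words_def by auto
  moreover have "inv (word_prod G b) = word_prod G (take n w)"
    using inv_word_prod[OF tk(1)] word_prod_closed[OF tk(1)] unfolding b_def by (metis inv_inv)
  then have "h = inv (word_prod G b) \<otimes> word_prod G (drop n w)"
    using w(2) word_prod_append[OF tk] by simp
  ultimately show "\<exists>a\<in>words (Suc n). \<exists>b\<in>words n. h = inv (word_prod G b) \<otimes> word_prod G a"
    by blast
next
  assume "\<exists>a\<in>words (Suc n). \<exists>b\<in>words n. h = inv (word_prod G b) \<otimes> word_prod G a"
  then obtain a b where ab: "a \<in> words (Suc n)" "b \<in> words n" "h = inv (word_prod G b) \<otimes> word_prod G a"
    by blast
  have "word_prod G a \<in> word_ball (Suc n)" "word_prod G b \<in> word_ball n"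
    using ab unfolding word_ball_def by auto
  then have "h \<in> word_ball (n + Suc n)" using ab(3) word_ball_mult inv_in_word_ball by blast
  then show "h \<in> window n" unfolding window_def by (simp add: mult_2)
qed

lemma conj_in_window:
  assumes "g \<in> carrier G" "h \<in> window n"
  shows "inv g \<otimes> h \<otimes> g \<in> window (n + word_len G Q g)"
proof -
  define l where "l = word_len G Q g"
  have g: "g \<in> word_ball l" "inv g \<in> word_ball l"
    using in_word_ball_word_len[OF assms(1)] inv_in_word_ball l_def by auto
  have "inv g \<otimes> h \<otimes> g \<in> word_ball (l + (2 * n + 1) + l)"
    using word_ball_mult[OF word_ball_mult[OF g(2) assms(2)[unfolded window_def]] g(1)] .
  moreover have "l + (2 * n + 1) + l = 2 * (n + l) + 1" by simp
  ultimately show ?thesis unfolding window_def l_def by (simp add: add.commute)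
qed

section \<open>Balls in the Schreier graph\<close>

definition trace :: "nat \<Rightarrow> 'g set \<Rightarrow> 'g set"
  where "trace n p = set_stabilizer G p \<inter> window n"

lemma sball_eq_image: "sball G Q n p = (\<lambda>ws. word_prod G ws <# p) ` words n"
  unfolding sball_def words_def by blast

lemma trace_eq_iff_words:
  assumes "p \<subseteq> carrier G" "p' \<subseteq> carrier G"
  shows "trace n p = trace n p' \<longleftrightarrow> (\<forall>a\<in>words (Suc n). \<forall>b\<in>words n.
     word_prod G a <# p = word_prod G b <# p \<longleftrightarrow> word_prod G a <# p' = word_prod G b <# p')"
proof -
  have "trace n p = trace n p' \<longleftrightarrow>
      (\<forall>h\<in>window n. h \<in> set_stabilizer G p \<longleftrightarrow> h \<in> set_stabilizer G p')"
    unfolding trace_def by blast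
  also have "\<dots> \<longleftrightarrow> (\<forall>a\<in>words (Suc n). \<forall>b\<in>words n.
      inv (word_prod G b) \<otimes> word_prod G a \<in> set_stabilizer G p \<longleftrightarrow>
      inv (word_prod G b) \<otimes> word_prod G a \<in> set_stabilizer G p')"
    unfolding Ball_def mem_window_iff_words by blast
  also have "\<dots> \<longleftrightarrow> (\<forall>a\<in>words (Suc n). \<forall>b\<in>words n.
     word_prod G a <# p = word_prod G b <# p \<longleftrightarrow> word_prod G a <# p' = word_prod G b <# p')"
    using l_coset_eq_iff_set_stabilizer[OF assms(1)] l_coset_eq_iff_set_stabilizer[OF assms(2)]
      word_prod_words_closed by simp
  finally show ?thesis .
qed

lemma ball_iso_transport:
  assumes "p \<subseteq> carrier G" "p' \<subseteq> carrier G" "f p = p'"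
    and f: "\<forall>u\<in>sball G Q n p. \<forall>v\<in>sball G Q n p. \<forall>q\<in>Q. (q <# u = v) \<longleftrightarrow> (q <# f u = f v)"
  shows "ws \<in> words n \<Longrightarrow> f (word_prod G ws <# p) = word_prod G ws <# p'"
proof (induction ws)
  case Nil then show ?case using assms by (simp add: lcos_mult_one)
next
  case (Cons q ws)
  have ws: "ws \<in> words n" and q: "q \<in> Q" "q \<in> carrier G"
    using Cons.prems gens_closed unfolding words_def by auto
  have "word_prod G ws <# p \<in> sball G Q n p" "word_prod G (q # ws) <# p \<in> sball G Q n p"
    using ws Cons.prems unfolding sball_eq_image by blast+
  moreover have "q <# (word_prod G ws <# p) = word_prod G (q # ws) <# p"
    using assms q word_prod_words_closed[OF ws] by (simp add: lcos_m_assoc)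
  ultimately have "q <# f (word_prod G ws <# p) = f (word_prod G (q # ws) <# p)" using f q by blast
  then show ?case
    using Cons.IH[OF ws] assms q word_prod_words_closed[OF ws] by (simp add: lcos_m_assoc)
qed

lemma ball_iso_imp_trace_eq:
  assumes p: "p \<subseteq> carrier G" and p': "p' \<subseteq> carrier G" and "ball_iso G Q n p p'"
  shows "trace n p = trace n p'"
proof -
  obtain f where bij: "bij_betw f (sball G Q n p) (sball G Q n p')" and fp: "f p = p'"
    and f: "\<forall>u\<in>sball G Q n p. \<forall>v\<in>sball G Q n p. \<forall>q\<in>Q. (q <# u = v) \<longleftrightarrow> (q <# f u = f v)"
    using assms(3) unfolding ball_iso_def by blast
  have tp: "\<And>ws. ws \<in> words n \<Longrightarrow> f (word_prod G ws <# p) = word_prod G ws <# p'"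
    using ball_iso_transport[OF p p' fp f] by blast
  have inj: "inj_on f (sball G Q n p)" using bij bij_betw_def by blast
  show ?thesis unfolding trace_eq_iff_words[OF p p']
  proof (intro ballI)
    fix a b assume a: "a \<in> words (Suc n)" and b: "b \<in> words n"
    have vb: "word_prod G b <# p \<in> sball G Q n p" using b sball_eq_image by blast
    show "word_prod G a <# p = word_prod G b <# p \<longleftrightarrow> word_prod G a <# p' = word_prod G b <# p'"
    proof (cases a)
      case Nil
      have "word_prod G [] <# p \<in> sball G Q n p"
        unfolding sball_eq_image by (rule imageI) (simp add: words_def)
      then have "p \<in> sball G Q n p" using p lcos_mult_one by simp
      then have "p = word_prod G b <# p \<longleftrightarrow> f p = f (word_prod G b <# p)"
        using inj_on_eq_iff[OF inj _ vb] by simp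
      then show ?thesis using Nil tp[OF b] fp p p' by (simp add: lcos_mult_one)
    next
      case (Cons q a')
      have a': "a' \<in> words n" "q \<in> Q" "q \<in> carrier G"
        using a Cons gens_closed unfolding words_def by auto
      have "word_prod G a' <# p \<in> sball G Q n p" using a' sball_eq_image by blast
      then have "q <# (word_prod G a' <# p) = word_prod G b <# p \<longleftrightarrow>
          q <# f (word_prod G a' <# p) = f (word_prod G b <# p)" using f vb a'(2) by blast
      moreover have "word_prod G a <# p = q <# (word_prod G a' <# p)"
           "word_prod G a <# p' = q <# (word_prod G a' <# p')"
        using Cons p p' a' word_prod_words_closed[OF a'(1)] by (simp_all add: lcos_m_assoc)
      ultimately show ?thesis using tp[OF a'(1)] tp[OF b] by simp
    qed
  qed
qed

lemma sball_map_exists: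
  assumes "\<And>a b. a \<in> words n \<Longrightarrow> b \<in> words n \<Longrightarrow>
    word_prod G a <# p = word_prod G b <# p \<longleftrightarrow> word_prod G a <# p' = word_prod G b <# p'"
  obtains f where "\<And>ws. ws \<in> words n \<Longrightarrow> f (word_prod G ws <# p) = word_prod G ws <# p'"
proof -
  define choice where "choice u = (SOME ws. ws \<in> words n \<and> u = word_prod G ws <# p)" for u
  have "word_prod G (choice (word_prod G ws <# p)) <# p' = word_prod G ws <# p'" if ws: "ws \<in> words n" for ws
  proof -
    have "choice (word_prod G ws <# p) \<in> words n \<and>
        word_prod G ws <# p = word_prod G (choice (word_prod G ws <# p)) <# p"
      unfolding choice_def by (rule someI[of _ ws]) (use ws in simp)
    then show ?thesis using assms[of "choice (word_prod G ws <# p)" ws] ws by simp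
  qed
  then show thesis by (rule that)
qed

lemma trace_eq_imp_ball_iso:
  assumes p: "p \<subseteq> carrier G" and p': "p' \<subseteq> carrier G" and "trace n p = trace n p'"
  shows "ball_iso G Q n p p'"
proof -
  have w: "\<forall>a\<in>words (Suc n). \<forall>b\<in>words n.
     word_prod G a <# p = word_prod G b <# p \<longleftrightarrow> word_prod G a <# p' = word_prod G b <# p'"
    using assms trace_eq_iff_words by blast
  have w': "word_prod G a <# p = word_prod G b <# p \<longleftrightarrow> word_prod G a <# p' = word_prod G b <# p'"
    if "a \<in> words n" "b \<in> words n" for a b
    using w that unfolding words_def by auto
  obtain f where f: "\<And>ws. ws \<in> words n \<Longrightarrow> f (word_prod G ws <# p) = word_prod G ws <# p'"
    using sball_map_exists w' by blast
  have fp: "f p = p'" using f[of "[]"] p p' by (simp add: lcos_mult_one words_def)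
  have inj: "inj_on f (sball G Q n p)"
  proof (rule inj_onI)
    fix u v assume "u \<in> sball G Q n p" "v \<in> sball G Q n p" "f u = f v"
    then obtain a b where ab: "a \<in> words n" "b \<in> words n" "u = word_prod G a <# p"
      "v = word_prod G b <# p" "word_prod G a <# p' = word_prod G b <# p'"
      unfolding sball_eq_image using f by auto
    then show "u = v" using w'[OF ab(1,2)] by simp
  qed
  have img: "f ` sball G Q n p = sball G Q n p'"
    unfolding sball_eq_image using f by (auto simp: image_iff)
  have edges: "(q <# u = v) \<longleftrightarrow> (q <# f u = f v)"
    if u: "u \<in> sball G Q n p" and v: "v \<in> sball G Q n p" and q: "q \<in> Q" for u v q
  proof -
    obtain a b where ab: "a \<in> words n" "u = word_prod G a <# p" "b \<in> words n" "v = word_prod G b <# p"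
      using u v sball_eq_image by auto
    have "q # a \<in> words (Suc n)" using ab q unfolding words_def by auto
    note w_qa = w[rule_format, OF this ab(3)]
    have qa: "q \<in> carrier G" "word_prod G a \<in> carrier G"
      using q gens_closed word_prod_words_closed[OF ab(1)] by auto
    have qu: "q <# u = word_prod G (q # a) <# p" using ab(2) p qa by (simp add: lcos_m_assoc)
    have qfu: "q <# f u = word_prod G (q # a) <# p'"
      using f[OF ab(1)] ab(2) p' qa by (simp add: lcos_m_assoc)
    show ?thesis by (simp only: qu qfu ab(4) f[OF ab(3)] w_qa)
  qed
  show ?thesis unfolding ball_iso_def
  proof (intro exI[of _ f] conjI)
    show "bij_betw f (sball G Q n p) (sball G Q n p')" using inj img by (simp add: bij_betw_def)
  qed (use fp edges in simp_all)
qed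

lemma ball_iso_iff_trace_eq:
  "p \<subseteq> carrier G \<Longrightarrow> p' \<subseteq> carrier G \<Longrightarrow> ball_iso G Q n p p' \<longleftrightarrow> trace n p = trace n p'"
  using ball_iso_imp_trace_eq trace_eq_imp_ball_iso by blast

end

section \<open>The unit space\<close>

locale schreier_groupoid = generated_group G Q for G :: "('g, 'b) monoid_scheme" (structure) and Q +
  fixes H :: "'g set"
  assumes subgroup_H: "subgroup H G"
begin

lemma schreier_vertex_closed: "p \<in> schreier_vertices G H \<Longrightarrow> p \<subseteq> carrier G"
  unfolding schreier_vertices_def using l_coset_subset_G subgroup.subset[OF subgroup_H] by blast

lemma l_coset_schreier_vertex:
  assumes "p \<in> schreier_vertices G H" "g \<in> carrier G"
  shows "g <# p \<in> schreier_vertices G H"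
proof -
  obtain k where k: "k \<in> carrier G" "p = k <# H" using assms(1) unfolding schreier_vertices_def by blast
  then have "g <# p = (g \<otimes> k) <# H"
    using assms(2) lcos_m_assoc[OF subgroup.subset[OF subgroup_H]] by simp
  then show ?thesis unfolding schreier_vertices_def using k assms(2) by blast
qed

lemma ball_class_eq:
  "p \<in> schreier_vertices G H \<Longrightarrow>
    ball_class G Q H n p = {p' \<in> schreier_vertices G H. trace n p' = trace n p}"
  unfolding ball_class_def using ball_iso_iff_trace_eq schreier_vertex_closed by auto

lemma GH0_level:
  assumes "x \<in> GH0 G Q H"
  obtains p where "p \<in> schreier_vertices G H" "x n = {p' \<in> schreier_vertices G H. trace n p' = trace n p}"
proof -
  have "x n \<in> E_set G Q H n" using assms unfolding GH0_def by blast
  then obtain p where "p \<in> schreier_vertices G H" "x n = ball_class G Q H n p"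
    unfolding E_set_def by blast
  then show thesis using that ball_class_eq by simp
qed

lemma pick_mem:
  assumes "x \<in> GH0 G Q H"
  shows "pick x n \<in> x n" "pick x n \<in> schreier_vertices G H"
proof -
  obtain p where p: "p \<in> schreier_vertices G H"
    "x n = {p' \<in> schreier_vertices G H. trace n p' = trace n p}"
    using GH0_level[OF assms] .
  then have "p \<in> x n" by simp
  then show "pick x n \<in> x n" unfolding pick_def by (rule someI)
  then show "pick x n \<in> schreier_vertices G H" using p by auto
qed

lemma GH0_level_pick:
  assumes "x \<in> GH0 G Q H"
  shows "x n = {p \<in> schreier_vertices G H. trace n p = trace n (pick x n)}"
proof -
  obtain p where p: "p \<in> schreier_vertices G H"
    "x n = {p' \<in> schreier_vertices G H. trace n p' = trace n p}"
    using GH0_level[OF assms] .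
  then have "trace n (pick x n) = trace n p" using pick_mem(1)[OF assms, of n] by auto
  then show ?thesis using p by simp
qed

lemma trace_pick_Suc:
  assumes "x \<in> GH0 G Q H"
  shows "trace n (pick x n) = trace (Suc n) (pick x (Suc n)) \<inter> window n"
proof -
  obtain p where p: "p \<in> schreier_vertices G H"
    "x (Suc n) = ball_class G Q H (Suc n) p" "x n = ball_class G Q H n p"
    using assms unfolding GH0_def by blast
  have "trace (Suc n) (pick x (Suc n)) = trace (Suc n) p" "trace n (pick x n) = trace n p"
    using pick_mem(1)[OF assms] p unfolding ball_class_eq[OF p(1)] by auto
  then show ?thesis unfolding trace_def using window_mono[of n "Suc n"] by auto
qed

lemma trace_pick_mono:
  assumes "x \<in> GH0 G Q H" "n \<le> m"
  shows "trace n (pick x n) = trace m (pick x m) \<inter> window n"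
  using assms(2)
proof (induction m rule: dec_induct)
  case base then show ?case unfolding trace_def by auto
next
  case (step m)
  then show ?case using trace_pick_Suc[OF assms(1), of m] window_mono[of n m] by auto
qed

(* The subgroup K_x corresponding to the unit x; for the unit of a vertex gH it is Stab(gH) = gHg\<inverse>. *)
definition subgroup_of :: "'g unit_pt \<Rightarrow> 'g set"
  where "subgroup_of x = (\<Union>n. trace n (pick x n))"

definition unit_of :: "'g set \<Rightarrow> 'g unit_pt"
  where "unit_of K = (\<lambda>n. {p \<in> schreier_vertices G H. trace n p = K \<inter> window n})"

lemma subgroup_of_Int_window:
  assumes "x \<in> GH0 G Q H"
  shows "subgroup_of x \<inter> window n = trace n (pick x n)"
proof
  show "trace n (pick x n) \<subseteq> subgroup_of x \<inter> window n"
    unfolding subgroup_of_def trace_def by auto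
  show "subgroup_of x \<inter> window n \<subseteq> trace n (pick x n)"
  proof
    fix h assume h: "h \<in> subgroup_of x \<inter> window n"
    then obtain m where m: "h \<in> trace m (pick x m)" unfolding subgroup_of_def by auto
    show "h \<in> trace n (pick x n)"
    proof (cases "m \<le> n")
      case True then show ?thesis using trace_pick_mono[OF assms True] m h by auto
    next
      case False then show ?thesis using trace_pick_mono[OF assms, of n m] m h by auto
    qed
  qed
qed

lemma subgroup_of_closed: "subgroup_of x \<subseteq> carrier G"
  unfolding subgroup_of_def trace_def using window_closed by blast

lemma mem_subgroup_of_iff:
  assumes "x \<in> GH0 G Q H" "h \<in> window n"
  shows "h \<in> subgroup_of x \<longleftrightarrow> h <# pick x n = pick x n"
  using subgroup_of_Int_window[OF assms(1), of n] assms(2) window_closed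
  unfolding trace_def set_stabilizer_def by auto

lemma subgroup_subgroup_of:
  assumes x: "x \<in> GH0 G Q H"
  shows "subgroup (subgroup_of x) G"
proof -
  have stab: "subgroup (set_stabilizer G (pick x n)) G" for n
    using subgroup_set_stabilizer schreier_vertex_closed pick_mem(2)[OF x] by blast
  have iff: "h \<in> subgroup_of x \<longleftrightarrow> h \<in> set_stabilizer G (pick x n)" if "h \<in> window n" for h n
    using subgroup_of_Int_window[OF x, of n] that unfolding trace_def by blast
  show ?thesis
  proof (rule subgroupI)
    show "subgroup_of x \<subseteq> carrier G" by (rule subgroup_of_closed)
    have "\<one> \<in> window 0" using in_window[OF one_closed] word_len_one by simp
    then show "subgroup_of x \<noteq> {}" using iff subgroup.one_closed[OF stab] by blast
  next
    fix a b assume a: "a \<in> subgroup_of x" and b: "b \<in> subgroup_of x"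
    have ab: "a \<in> carrier G" "b \<in> carrier G" using a b subgroup_of_closed by auto
    define n where "n = max (word_len G Q a) (max (word_len G Q b) (word_len G Q (a \<otimes> b)))"
    have n: "a \<in> window n" "b \<in> window n" "a \<otimes> b \<in> window n"
      using ab in_window unfolding n_def by auto
    have "inv a \<in> window n" using n(1) inv_in_word_ball unfolding window_def by blast
    moreover have "a \<in> set_stabilizer G (pick x n)" "b \<in> set_stabilizer G (pick x n)"
      using a b n iff by blast+
    ultimately show "inv a \<in> subgroup_of x" "a \<otimes> b \<in> subgroup_of x"
      using iff n(3) subgroup.m_inv_closed[OF stab] subgroup.m_closed[OF stab] by blast+
  qed
qed

lemma unit_of_subgroup_of: "x \<in> GH0 G Q H \<Longrightarrow> unit_of (subgroup_of x) = x"
  unfolding unit_of_def using GH0_level_pick subgroup_of_Int_window by auto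

lemma GH0_eq_iff:
  "x \<in> GH0 G Q H \<Longrightarrow> y \<in> GH0 G Q H \<Longrightarrow> x = y \<longleftrightarrow> subgroup_of x = subgroup_of y"
  using unit_of_subgroup_of by metis

lemma GH0_eq_at_iff:
  assumes "x \<in> GH0 G Q H" "y \<in> GH0 G Q H"
  shows "x n = y n \<longleftrightarrow> subgroup_of x \<inter> window n = subgroup_of y \<inter> window n"
proof
  assume "x n = y n"
  then have "pick x n \<in> y n" using pick_mem(1)[OF assms(1), of n] by simp
  then show "subgroup_of x \<inter> window n = subgroup_of y \<inter> window n"
    using GH0_level_pick[OF assms(2)] subgroup_of_Int_window assms by auto
next
  assume "subgroup_of x \<inter> window n = subgroup_of y \<inter> window n"
  then show "x n = y n"
    using GH0_level_pick[OF assms(1)] GH0_level_pick[OF assms(2)] subgroup_of_Int_window assms by simp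
qed

lemma GH0_eq_at_mono:
  assumes "x \<in> GH0 G Q H" "y \<in> GH0 G Q H" "x m = y m" "n \<le> m"
  shows "x n = y n"
  using assms window_mono[OF assms(4)] unfolding GH0_eq_at_iff[OF assms(1,2)] by blast

lemma GH0_eq_at_subgroup_of:
  assumes "x \<in> GH0 G Q H" "y \<in> GH0 G Q H" "x m = y m" "h \<in> window m"
  shows "h \<in> subgroup_of x \<longleftrightarrow> h \<in> subgroup_of y"
  using assms unfolding GH0_eq_at_iff[OF assms(1,2)] by blast

definition realizable :: "'g set \<Rightarrow> bool"
  where "realizable K \<longleftrightarrow> (\<forall>n. \<exists>p\<in>schreier_vertices G H. trace n p = K \<inter> window n)"

lemma
  assumes "K \<subseteq> carrier G" "realizable K"
  shows unit_of_mem_GH0: "unit_of K \<in> GH0 G Q H"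
    and subgroup_of_unit_of: "subgroup_of (unit_of K) = K"
proof -
  have level: "ball_class G Q H n p = unit_of K n"
    if "p \<in> schreier_vertices G H" "trace n p = K \<inter> window n" for n p
    using ball_class_eq[OF that(1)] that(2) unfolding unit_of_def by simp
  show u: "unit_of K \<in> GH0 G Q H"
    unfolding GH0_def
  proof (intro CollectI conjI allI)
    fix n
    obtain p where p: "p \<in> schreier_vertices G H" "trace n p = K \<inter> window n"
      using assms(2) realizable_def by blast
    show "unit_of K n \<in> E_set G Q H n" unfolding E_set_def using level[OF p] p(1) by blast
    obtain p where p: "p \<in> schreier_vertices G H" "trace (Suc n) p = K \<inter> window (Suc n)"
      using assms(2) realizable_def by blast
    have "trace n p = K \<inter> window n"
      using p(2) window_mono[of n "Suc n"] unfolding trace_def by auto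
    then show "\<exists>p\<in>schreier_vertices G H.
        unit_of K (Suc n) = ball_class G Q H (Suc n) p \<and> unit_of K n = ball_class G Q H n p"
      using level[OF p] level[OF p(1)] p(1) by auto
  qed
  have "trace n (pick (unit_of K) n) = K \<inter> window n" for n
    using pick_mem(1)[OF u, of n] unfolding unit_of_def by simp
  then have "subgroup_of (unit_of K) = (\<Union>n. K \<inter> window n)" unfolding subgroup_of_def by simp
  also have "\<dots> = K" using assms(1) in_window by blast
  finally show "subgroup_of (unit_of K) = K" .
qed

lemma trace_uact_pick:
  assumes x: "x \<in> GH0 G Q H" and g: "g \<in> carrier G"
  shows "trace n (g <# pick x (n + word_len G Q g)) = conj_sub G g (subgroup_of x) \<inter> window n"
proof -
  define p where "p = pick x (n + word_len G Q g)"
  have p: "p \<subseteq> carrier G" using pick_mem[OF x] schreier_vertex_closed p_def by auto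
  have "h <# (g <# p) = g <# p \<longleftrightarrow> h \<in> conj_sub G g (subgroup_of x)" if h: "h \<in> window n" for h
  proof -
    have hc: "h \<in> carrier G" using h window_closed by auto
    have "h <# (g <# p) = g <# p \<longleftrightarrow> (inv g \<otimes> h \<otimes> g) <# p = p"
      using l_coset_eq_iff_set_stabilizer[OF p m_closed[OF hc g] g] hc g p
      by (simp add: lcos_m_assoc set_stabilizer_def m_assoc)
    also have "\<dots> \<longleftrightarrow> inv g \<otimes> h \<otimes> g \<in> subgroup_of x"
      using mem_subgroup_of_iff[OF x conj_in_window[OF g h]] p_def by simp
    also have "\<dots> \<longleftrightarrow> h \<in> conj_sub G g (subgroup_of x)"
      using mem_conj_sub_iff[OF subgroup_of_closed g] hc by simp
    finally show ?thesis .
  qed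
  then show ?thesis unfolding trace_def set_stabilizer_def p_def using window_closed by auto
qed

lemma
  assumes x: "x \<in> GH0 G Q H" and g: "g \<in> carrier G"
  shows uact_mem_GH0: "uact G Q H g x \<in> GH0 G Q H"
    and subgroup_of_uact: "subgroup_of (uact G Q H g x) = conj_sub G g (subgroup_of x)"
proof -
  have vertex: "g <# pick x (n + word_len G Q g) \<in> schreier_vertices G H" for n
    using l_coset_schreier_vertex pick_mem(2)[OF x] g by blast
  have uact: "uact G Q H g x = unit_of (conj_sub G g (subgroup_of x))"
    unfolding uact_def unit_of_def using ball_class_eq[OF vertex] trace_uact_pick[OF x g] by simp
  have "realizable (conj_sub G g (subgroup_of x))"
    unfolding realizable_def using trace_uact_pick[OF x g] vertex by blast
  moreover have "conj_sub G g (subgroup_of x) \<subseteq> carrier G"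
    using conj_sub_closed[OF subgroup_of_closed g] .
  ultimately show "uact G Q H g x \<in> GH0 G Q H" "subgroup_of (uact G Q H g x) = conj_sub G g (subgroup_of x)"
    unfolding uact using unit_of_mem_GH0 subgroup_of_unit_of by blast+
qed

lemma uact_one: "x \<in> GH0 G Q H \<Longrightarrow> uact G Q H \<one> x = x"
  using GH0_eq_iff uact_mem_GH0 subgroup_of_uact conj_sub_one subgroup_of_closed by simp

lemma uact_mult:
  assumes "x \<in> GH0 G Q H" "g \<in> carrier G" "h \<in> carrier G"
  shows "uact G Q H (g \<otimes> h) x = uact G Q H g (uact G Q H h x)"
  using GH0_eq_iff uact_mem_GH0 subgroup_of_uact assms conj_sub_mult subgroup_of_closed by simp

lemma uact_inv:
  "x \<in> GH0 G Q H \<Longrightarrow> g \<in> carrier G \<Longrightarrow> uact G Q H (inv g) (uact G Q H g x) = x"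
  using uact_mult[of x "inv g" g] uact_one by (simp add: uact_mult[symmetric])

lemma uact_cong:
  assumes x: "x \<in> GH0 G Q H" and "g \<in> carrier G" "g' \<in> carrier G" "inv g \<otimes> g' \<in> subgroup_of x"
  shows "uact G Q H g' x = uact G Q H g x"
proof -
  have "g' = g \<otimes> (inv g \<otimes> g')" using assms by (simp add: m_assoc[symmetric])
  then have "conj_sub G g' (subgroup_of x) = conj_sub G g (conj_sub G (inv g \<otimes> g') (subgroup_of x))"
    using conj_sub_mult[OF subgroup_of_closed assms(2)] assms by (metis inv_closed m_closed)
  also have "\<dots> = conj_sub G g (subgroup_of x)"
    using conj_sub_self[OF subgroup_subgroup_of[OF x] assms(4)] by simp
  finally show ?thesis using GH0_eq_iff uact_mem_GH0 subgroup_of_uact assms by simp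
qed

section \<open>Arrows and the groupoid structure\<close>

lemma arr_eq_iff_subgroup_of:
  assumes x: "x \<in> GH0 G Q H" and "g \<in> carrier G" "g' \<in> carrier G"
  shows "arr_eq G x g g' \<longleftrightarrow> inv g \<otimes> g' \<in> subgroup_of x"
proof -
  define h where "h = inv g \<otimes> g'"
  have h: "h \<in> carrier G" using assms h_def by simp
  have eventually: "g <# pick x n = g' <# pick x n \<longleftrightarrow> h \<in> subgroup_of x"
    if "word_len G Q h \<le> n" for n
  proof -
    have "pick x n \<subseteq> carrier G" using pick_mem[OF x] schreier_vertex_closed by auto
    then have "g <# pick x n = g' <# pick x n \<longleftrightarrow> h <# pick x n = pick x n"
      using l_coset_eq_iff_set_stabilizer[OF _ assms(3,2)] h h_def
      by (auto simp: set_stabilizer_def)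
    then show ?thesis using mem_subgroup_of_iff[OF x in_window[OF h that]] by simp
  qed
  show ?thesis unfolding arr_eq_def h_def[symmetric]
  proof
    assume "\<exists>N. \<forall>n\<ge>N. g <# pick x n = g' <# pick x n"
    then obtain N where "\<forall>n\<ge>N. g <# pick x n = g' <# pick x n" by blast
    then show "h \<in> subgroup_of x" using eventually[of "max N (word_len G Q h)"] by simp
  qed (use eventually in blast)
qed

lemma arr_eq_l_coset:
  assumes x: "x \<in> GH0 G Q H" and g: "g \<in> carrier G"
  shows "arr G x g = (x, g <# subgroup_of x)"
  using arr_eq_iff_subgroup_of[OF x g] l_coset_conv[OF subgroup_subgroup_of[OF x] g]
  unfolding arr_def by auto

lemma fst_arr [simp]: "fst (arr G x g) = x"
  unfolding arr_def by simp

lemma arr_eq_arr_iff: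
  assumes "x \<in> GH0 G Q H" "y \<in> GH0 G Q H" "g \<in> carrier G" "g' \<in> carrier G"
  shows "arr G x g = arr G y g' \<longleftrightarrow> x = y \<and> inv g \<otimes> g' \<in> subgroup_of x"
  using l_coset_eq_iff[OF subgroup_subgroup_of[OF assms(1)] assms(3,4)]
  unfolding arr_eq_l_coset[OF assms(1,3)] arr_eq_l_coset[OF assms(2,4)] by auto

lemma arr_cong:
  assumes "x \<in> GH0 G Q H" "g \<in> carrier G" "g' \<in> carrier G" "inv g \<otimes> g' \<in> subgroup_of x"
  shows "arr G x g' = arr G x g"
  using arr_eq_arr_iff[OF assms(1,1,3,2)] inv_mult_mem_swap[OF subgroup_subgroup_of[OF assms(1)] assms(2,3)]
    assms(4) by simp

lemma
  assumes x: "x \<in> GH0 G Q H" and g: "g \<in> carrier G"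
  shows arr_rep_closed: "arr_rep G (arr G x g) \<in> carrier G"
    and arr_rep_arr: "inv g \<otimes> arr_rep G (arr G x g) \<in> subgroup_of x"
proof -
  have coset: "snd (arr G x g) = {g' \<in> carrier G. inv g \<otimes> g' \<in> subgroup_of x}"
    using arr_eq_l_coset[OF x g] l_coset_conv[OF subgroup_subgroup_of[OF x] g] by simp
  have "g \<in> carrier G \<and> g \<in> snd (arr G x g)"
    unfolding coset using g subgroup.one_closed[OF subgroup_subgroup_of[OF x]] by simp
  then have "arr_rep G (arr G x g) \<in> carrier G \<and> arr_rep G (arr G x g) \<in> snd (arr G x g)"
    unfolding arr_rep_def by (rule someI[of _ g])
  then show "arr_rep G (arr G x g) \<in> carrier G" "inv g \<otimes> arr_rep G (arr G x g) \<in> subgroup_of x"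
    unfolding coset by simp_all
qed

lemma GH_arrowsE:
  assumes "a \<in> GH_arrows G Q H"
  obtains x g where "x \<in> GH0 G Q H" "g \<in> carrier G" "a = arr G x g"
  using assms unfolding GH_arrows_def by blast

lemma arr_mem_GH_arrows: "x \<in> GH0 G Q H \<Longrightarrow> g \<in> carrier G \<Longrightarrow> arr G x g \<in> GH_arrows G Q H"
  unfolding GH_arrows_def by blast

lemma GH_r_arr: "GH_r G (arr G x g) = arr G x \<one>"
  unfolding GH_r_def by simp

lemma GH_s_arr:
  assumes "x \<in> GH0 G Q H" "g \<in> carrier G"
  shows "GH_s G Q H (arr G x g) = arr G (uact G Q H g x) \<one>"
  unfolding GH_s_def using uact_cong[OF assms arr_rep_closed[OF assms] arr_rep_arr[OF assms]] by simp

lemma GH_mult_arr: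
  assumes x: "x \<in> GH0 G Q H" and g: "g \<in> carrier G" and h: "h \<in> carrier G"
  shows "GH_mult G (arr G x g) (arr G (uact G Q H g x) h) = arr G x (h \<otimes> g)"
proof -
  define y where "y = uact G Q H g x"
  have y: "y \<in> GH0 G Q H" using uact_mem_GH0[OF x g] y_def by simp
  define r where "r = arr_rep G (arr G x g)"
  define s where "s = arr_rep G (arr G y h)"
  have r: "r \<in> carrier G" "inv g \<otimes> r \<in> subgroup_of x"
    using arr_rep_closed[OF x g] arr_rep_arr[OF x g] r_def by auto
  have s: "s \<in> carrier G" "inv h \<otimes> s \<in> subgroup_of y"
    using arr_rep_closed[OF y h] arr_rep_arr[OF y h] s_def by auto
  have "inv g \<otimes> (inv h \<otimes> s) \<otimes> g \<in> subgroup_of x"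
    using s subgroup_of_uact[OF x g] mem_conj_sub_iff[OF subgroup_of_closed g] unfolding y_def by auto
  moreover have "inv (h \<otimes> g) \<otimes> (s \<otimes> r) = (inv g \<otimes> (inv h \<otimes> s) \<otimes> g) \<otimes> (inv g \<otimes> r)"
    using g h r s by (simp add: inv_mult_group m_assoc) (simp add: m_assoc[symmetric])
  ultimately have "inv (h \<otimes> g) \<otimes> (s \<otimes> r) \<in> subgroup_of x"
    using r subgroup.m_closed[OF subgroup_subgroup_of[OF x]] by metis
  then have "arr G x (s \<otimes> r) = arr G x (h \<otimes> g)"
    using arr_cong[OF x] g h r s by simp
  moreover have "GH_mult G (arr G x g) (arr G y h) = arr G x (s \<otimes> r)"
    unfolding GH_mult_def r_def s_def by simp
  ultimately show ?thesis unfolding y_def by simp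
qed

lemma GH_inv_arr:
  assumes x: "x \<in> GH0 G Q H" and g: "g \<in> carrier G"
  shows "GH_inv G Q H (arr G x g) = arr G (uact G Q H g x) (inv g)"
proof -
  define r where "r = arr_rep G (arr G x g)"
  have r: "r \<in> carrier G" "inv g \<otimes> r \<in> subgroup_of x"
    using arr_rep_closed[OF x g] arr_rep_arr[OF x g] r_def by auto
  have "inv r \<otimes> g \<in> subgroup_of x"
    using inv_mult_mem_swap[OF subgroup_subgroup_of[OF x] g r(1)] r by simp
  moreover have "inv g \<otimes> (inv (inv g) \<otimes> inv r) \<otimes> g = inv r \<otimes> g"
    using g r by (simp add: m_assoc[symmetric])
  ultimately have "inv (inv g) \<otimes> inv r \<in> subgroup_of (uact G Q H g x)"
    using subgroup_of_uact[OF x g] mem_conj_sub_iff[OF subgroup_of_closed g] g r by simp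
  then have "arr G (uact G Q H g x) (inv r) = arr G (uact G Q H g x) (inv g)"
    using arr_cong[OF uact_mem_GH0[OF x g]] g r by simp
  then show ?thesis
    unfolding GH_inv_def r_def[symmetric] using uact_cong[OF x g r] by simp
qed

lemma GH_s_eq_GH_r_iff:
  assumes "x \<in> GH0 G Q H" "g \<in> carrier G" "y \<in> GH0 G Q H"
  shows "GH_s G Q H (arr G x g) = GH_r G (arr G y h) \<longleftrightarrow> y = uact G Q H g x"
  unfolding GH_s_arr[OF assms(1,2)] GH_r_arr
  using arr_eq_arr_iff[OF uact_mem_GH0[OF assms(1,2)] assms(3) one_closed one_closed] by auto

lemma composable_arrowsE:
  assumes "a \<in> GH_arrows G Q H" "b \<in> GH_arrows G Q H" "GH_s G Q H a = GH_r G b"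
  obtains x g h where "x \<in> GH0 G Q H" "g \<in> carrier G" "h \<in> carrier G"
    "a = arr G x g" "b = arr G (uact G Q H g x) h"
proof -
  obtain x g where xg: "x \<in> GH0 G Q H" "g \<in> carrier G" "a = arr G x g" using assms(1) by (rule GH_arrowsE)
  obtain y h where yh: "y \<in> GH0 G Q H" "h \<in> carrier G" "b = arr G y h" using assms(2) by (rule GH_arrowsE)
  have "y = uact G Q H g x" using GH_s_eq_GH_r_iff[OF xg(1,2) yh(1)] assms(3) xg yh by simp
  then show thesis using that xg yh by blast
qed

lemma GH_mult_assoc:
  assumes "a \<in> GH_arrows G Q H" "b \<in> GH_arrows G Q H" "c \<in> GH_arrows G Q H"
    and "GH_s G Q H a = GH_r G b" "GH_s G Q H b = GH_r G c"
  shows "GH_mult G (GH_mult G a b) c = GH_mult G a (GH_mult G b c)"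
proof -
  obtain x g h where xgh: "x \<in> GH0 G Q H" "g \<in> carrier G" "h \<in> carrier G"
    "a = arr G x g" "b = arr G (uact G Q H g x) h"
    using assms(1,2,4) by (rule composable_arrowsE)
  define y where "y = uact G Q H g x"
  have y: "y \<in> GH0 G Q H" using uact_mem_GH0[OF xgh(1,2)] y_def by simp
  obtain z k where z: "z \<in> GH0 G Q H" and k: "k \<in> carrier G" "c = arr G z k"
    using assms(3) by (rule GH_arrowsE)
  have z_eq: "z = uact G Q H h y"
    using GH_s_eq_GH_r_iff[OF y xgh(3) z] assms(5) xgh(5) k(2) y_def by simp
  have "GH_mult G (GH_mult G a b) c = arr G x (k \<otimes> (h \<otimes> g))"
    using GH_mult_arr[OF xgh(1,2,3)] GH_mult_arr[OF xgh(1) m_closed[OF xgh(3,2)] k(1)]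
      uact_mult[OF xgh(1,3,2)] xgh(4,5) k(2) z_eq y_def by simp
  also have "\<dots> = GH_mult G a (GH_mult G b c)"
    using GH_mult_arr[OF y xgh(3) k(1)] GH_mult_arr[OF xgh(1,2) m_closed[OF k(1) xgh(3)]]
      xgh k z_eq y_def by (simp add: m_assoc)
  finally show ?thesis .
qed

lemma GH_units_closed: "GH_units G Q H \<subseteq> GH_arrows G Q H"
  unfolding GH_units_def using arr_mem_GH_arrows by auto

lemma groupoid_GH:
  "is_groupoid (GH_arrows G Q H) (GH_units G Q H) (GH_r G) (GH_s G Q H) (GH_mult G) (GH_inv G Q H)"
  unfolding is_groupoid_def
proof (intro conjI ballI impI)
  show "GH_units G Q H \<subseteq> GH_arrows G Q H" by (rule GH_units_closed)
next
  fix a assume "a \<in> GH_arrows G Q H"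
  then obtain x g where x: "x \<in> GH0 G Q H" and g: "g \<in> carrier G" and a: "a = arr G x g"
    by (rule GH_arrowsE)
  have y: "uact G Q H g x \<in> GH0 G Q H" using uact_mem_GH0[OF x g] .
  note simps = a GH_r_arr GH_s_arr[OF x g] GH_inv_arr[OF x g] GH_s_arr[OF y inv_closed[OF g]]
    uact_inv[OF x g] uact_one[OF x]
  show "GH_r G a \<in> GH_units G Q H" "GH_s G Q H a \<in> GH_units G Q H"
    unfolding GH_units_def simps using x y by blast+
  show "GH_mult G (GH_r G a) a = a" "GH_mult G a (GH_s G Q H a) = a"
    using GH_mult_arr[OF x one_closed g] GH_mult_arr[OF x g one_closed] g by (simp_all add: simps)
  show "GH_inv G Q H a \<in> GH_arrows G Q H"
    unfolding simps using arr_mem_GH_arrows[OF y] g by simp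
  show "GH_r G (GH_inv G Q H a) = GH_s G Q H a" "GH_s G Q H (GH_inv G Q H a) = GH_r G a"
    by (simp_all add: simps)
  show "GH_mult G a (GH_inv G Q H a) = GH_r G a" "GH_mult G (GH_inv G Q H a) a = GH_s G Q H a"
    using GH_mult_arr[OF x g inv_closed[OF g]] GH_mult_arr[OF y inv_closed[OF g] g] g
    by (simp_all add: simps)
next
  fix u assume "u \<in> GH_units G Q H"
  then obtain x where "x \<in> GH0 G Q H" "u = arr G x \<one>" unfolding GH_units_def by blast
  then show "GH_r G u = u" "GH_s G Q H u = u" by (simp_all add: GH_r_arr GH_s_arr uact_one)
next
  fix a b assume "a \<in> GH_arrows G Q H" "b \<in> GH_arrows G Q H" "GH_s G Q H a = GH_r G b"
  then obtain x g h where x: "x \<in> GH0 G Q H" and gh: "g \<in> carrier G" "h \<in> carrier G"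
    and ab: "a = arr G x g" "b = arr G (uact G Q H g x) h"
    by (rule composable_arrowsE)
  show "GH_mult G a b \<in> GH_arrows G Q H" "GH_r G (GH_mult G a b) = GH_r G a"
    "GH_s G Q H (GH_mult G a b) = GH_s G Q H b"
    unfolding ab GH_mult_arr[OF x gh] using arr_mem_GH_arrows[OF x] x gh
    by (simp_all add: GH_r_arr GH_s_arr uact_mem_GH0 uact_mult)
next
  fix a b c
  assume "a \<in> GH_arrows G Q H" "b \<in> GH_arrows G Q H" "c \<in> GH_arrows G Q H"
    and "GH_s G Q H a = GH_r G b \<and> GH_s G Q H b = GH_r G c"
  then show "GH_mult G (GH_mult G a b) c = GH_mult G a (GH_mult G b c)"
    using GH_mult_assoc by blast
qed

section \<open>The topology on arrows\<close>

lemma GH_basicE: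
  assumes "b \<in> GH_basic G Q H N c g"
  obtains y where "y \<in> GH0 G Q H" "y N = c" "b = arr G y g"
  using assms unfolding GH_basic_def by blast

lemma arr_mem_GH_basic_iff:
  assumes "y \<in> GH0 G Q H" "g \<in> carrier G" "g' \<in> carrier G"
  shows "arr G y g' \<in> GH_basic G Q H N c g \<longleftrightarrow> y N = c \<and> inv g \<otimes> g' \<in> subgroup_of y"
proof
  assume "arr G y g' \<in> GH_basic G Q H N c g"
  then obtain x where x: "x \<in> GH0 G Q H" "x N = c" "arr G y g' = arr G x g" by (rule GH_basicE)
  then show "y N = c \<and> inv g \<otimes> g' \<in> subgroup_of y"
    using arr_eq_arr_iff[OF assms(1) x(1) assms(3,2)] inv_mult_mem_swap[OF subgroup_subgroup_of[OF assms(1)] assms(2,3)]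
    by auto
next
  assume "y N = c \<and> inv g \<otimes> g' \<in> subgroup_of y"
  then show "arr G y g' \<in> GH_basic G Q H N c g"
    using arr_cong[OF assms(1,2,3)] assms(1) unfolding GH_basic_def by auto
qed

lemma arr_mem_GH_basic: "x \<in> GH0 G Q H \<Longrightarrow> arr G x g \<in> GH_basic G Q H N (x N) g"
  unfolding GH_basic_def by blast

lemma openin_GH_basic:
  assumes "x \<in> GH0 G Q H" "g \<in> carrier G" "word_len G Q g \<le> N"
  shows "openin (GH_topology G Q H) (GH_basic G Q H N (x N) g)"
  unfolding GH_topology_def
  by (rule topology_generated_by_Basis) (use assms in \<open>auto simp: GH0_def\<close>)

lemma topspace_GH_topology: "topspace (GH_topology G Q H) = GH_arrows G Q H"
proof -
  have "GH_basic G Q H N c g \<subseteq> GH_arrows G Q H" if "g \<in> carrier G" for N c g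
    using that arr_mem_GH_arrows by (auto elim: GH_basicE)
  moreover have "a \<in> topspace (GH_topology G Q H)" if a: "a \<in> GH_arrows G Q H" for a
  proof -
    obtain x g where "x \<in> GH0 G Q H" "g \<in> carrier G" "a = arr G x g"
      using a by (rule GH_arrowsE)
    then show ?thesis
      using openin_GH_basic[of x g "word_len G Q g"] arr_mem_GH_basic openin_subset by blast
  qed
  ultimately show ?thesis unfolding GH_topology_def by auto
qed

definition cylinder_open :: "('g unit_pt \<times> 'g set) set \<Rightarrow> bool"
  where "cylinder_open W \<longleftrightarrow> (\<forall>x\<in>GH0 G Q H. \<forall>g\<in>carrier G. arr G x g \<in> W \<longrightarrow>
     (\<exists>M. \<forall>y\<in>GH0 G Q H. y M = x M \<longrightarrow> arr G y g \<in> W))"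

lemma cylinder_open_Int:
  assumes "cylinder_open V" "cylinder_open W"
  shows "cylinder_open (V \<inter> W)"
  unfolding cylinder_open_def
proof (intro ballI impI)
  fix x g assume x: "x \<in> GH0 G Q H" and g: "g \<in> carrier G" and "arr G x g \<in> V \<inter> W"
  then obtain M1 M2 where M1: "\<forall>y\<in>GH0 G Q H. y M1 = x M1 \<longrightarrow> arr G y g \<in> V"
    and M2: "\<forall>y\<in>GH0 G Q H. y M2 = x M2 \<longrightarrow> arr G y g \<in> W"
    using assms unfolding cylinder_open_def by blast
  show "\<exists>M. \<forall>y\<in>GH0 G Q H. y M = x M \<longrightarrow> arr G y g \<in> V \<inter> W"
  proof (intro exI[of _ "max M1 M2"] ballI impI)
    fix y assume y: "y \<in> GH0 G Q H" "y (max M1 M2) = x (max M1 M2)"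
    then have "y M1 = x M1" "y M2 = x M2" using GH0_eq_at_mono[OF y(1) x y(2)] by simp_all
    then show "arr G y g \<in> V \<inter> W" using M1 M2 y(1) by blast
  qed
qed

lemma cylinder_open_GH_basic:
  assumes g0: "g0 \<in> carrier G"
  shows "cylinder_open (GH_basic G Q H N c g0)"
  unfolding cylinder_open_def
proof (intro ballI impI)
  fix x g assume x: "x \<in> GH0 G Q H" and g: "g \<in> carrier G" and "arr G x g \<in> GH_basic G Q H N c g0"
  then have xN: "x N = c" and h: "inv g0 \<otimes> g \<in> subgroup_of x"
    using arr_mem_GH_basic_iff[OF x g0 g] by auto
  define M where "M = max N (word_len G Q (inv g0 \<otimes> g))"
  have "inv g0 \<otimes> g \<in> window M" using in_window g g0 M_def by simp
  then have "y N = c \<and> inv g0 \<otimes> g \<in> subgroup_of y" if "y \<in> GH0 G Q H" "y M = x M" for y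
    using GH0_eq_at_mono[OF that(1) x that(2)] GH0_eq_at_subgroup_of[OF that(1) x that(2)] xN h M_def
    by simp
  then show "\<exists>M. \<forall>y\<in>GH0 G Q H. y M = x M \<longrightarrow> arr G y g \<in> GH_basic G Q H N c g0"
    using arr_mem_GH_basic_iff g0 g by blast
qed

lemma cylinder_open_if_openin:
  assumes "openin (GH_topology G Q H) W"
  shows "cylinder_open W"
proof -
  have "generate_topology_on {GH_basic G Q H N c g | N c g. c \<in> E_set G Q H N \<and>
      g \<in> carrier G \<and> word_len G Q g \<le> N} W"
    using assms unfolding GH_topology_def openin_topology_generated_by_iff .
  then show ?thesis
  proof (induction rule: generate_topology_on.induct)
    case Empty
    then show ?case unfolding cylinder_open_def by simp
  next
    case (Int V W)
    then show ?case using cylinder_open_Int by blast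
  next
    case (UN K)
    show ?case unfolding cylinder_open_def
    proof (intro ballI impI)
      fix x g assume x: "x \<in> GH0 G Q H" and g: "g \<in> carrier G" and "arr G x g \<in> \<Union>K"
      then obtain V where V: "V \<in> K" "arr G x g \<in> V" by blast
      then obtain M where "\<forall>y\<in>GH0 G Q H. y M = x M \<longrightarrow> arr G y g \<in> V"
        using UN.IH[OF V(1)] x g unfolding cylinder_open_def by blast
      then show "\<exists>M. \<forall>y\<in>GH0 G Q H. y M = x M \<longrightarrow> arr G y g \<in> \<Union>K" using V(1) by blast
    qed
  next
    case (Basis V)
    then show ?case using cylinder_open_GH_basic by blast
  qed
qed

lemma openin_if_cylinder_open:
  assumes W: "W \<subseteq> GH_arrows G Q H" "cylinder_open W"
  shows "openin (GH_topology G Q H) W"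
  unfolding openin_subopen[of _ W]
proof
  fix a assume "a \<in> W"
  then have "a \<in> GH_arrows G Q H" using W by blast
  then obtain x g where x: "x \<in> GH0 G Q H" and g: "g \<in> carrier G" and a: "a = arr G x g"
    by (rule GH_arrowsE)
  then obtain M where M: "\<forall>y\<in>GH0 G Q H. y M = x M \<longrightarrow> arr G y g \<in> W"
    using W \<open>a \<in> W\<close> unfolding cylinder_open_def by blast
  define N where "N = max M (word_len G Q g)"
  have "GH_basic G Q H N (x N) g \<subseteq> W"
  proof
    fix b assume "b \<in> GH_basic G Q H N (x N) g"
    then obtain y where y: "y \<in> GH0 G Q H" "y N = x N" "b = arr G y g" by (rule GH_basicE)
    then have "y M = x M" using GH0_eq_at_mono[OF y(1) x y(2)] N_def by simp
    then show "b \<in> W" using M y by blast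
  qed
  then show "\<exists>T. openin (GH_topology G Q H) T \<and> a \<in> T \<and> T \<subseteq> W"
    using openin_GH_basic[OF x g, of N] arr_mem_GH_basic[OF x] N_def a by auto
qed

lemma openin_GH_topology_iff:
  "openin (GH_topology G Q H) W \<longleftrightarrow> W \<subseteq> GH_arrows G Q H \<and> cylinder_open W"
proof
  assume "openin (GH_topology G Q H) W"
  then show "W \<subseteq> GH_arrows G Q H \<and> cylinder_open W"
    using cylinder_open_if_openin openin_subset topspace_GH_topology by blast
qed (use openin_if_cylinder_open in blast)

lemma continuous_map_GH_topology:
  assumes f: "\<And>x g. x \<in> GH0 G Q H \<Longrightarrow> g \<in> carrier G \<Longrightarrow> f (arr G x g) = arr G (\<phi> g x) (\<psi> g)"
    and \<phi>: "\<And>x g. x \<in> GH0 G Q H \<Longrightarrow> g \<in> carrier G \<Longrightarrow> \<phi> g x \<in> GH0 G Q H"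
    and \<psi>: "\<And>g. g \<in> carrier G \<Longrightarrow> \<psi> g \<in> carrier G"
    and local: "\<And>x g M'. x \<in> GH0 G Q H \<Longrightarrow> g \<in> carrier G \<Longrightarrow>
      \<exists>M. \<forall>y\<in>GH0 G Q H. y M = x M \<longrightarrow> \<phi> g y M' = \<phi> g x M'"
  shows "continuous_map (GH_topology G Q H) (GH_topology G Q H) f"
  unfolding continuous_map topspace_GH_topology
proof (intro conjI allI impI)
  show "f ` GH_arrows G Q H \<subseteq> GH_arrows G Q H"
  proof (rule image_subsetI)
    fix a assume "a \<in> GH_arrows G Q H"
    then obtain x g where "x \<in> GH0 G Q H" "g \<in> carrier G" "a = arr G x g" by (rule GH_arrowsE)
    then show "f a \<in> GH_arrows G Q H" using f \<phi> \<psi> arr_mem_GH_arrows by simp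
  qed
  fix W assume "openin (GH_topology G Q H) W"
  then have W: "cylinder_open W" using openin_GH_topology_iff by blast
  have "cylinder_open {a \<in> GH_arrows G Q H. f a \<in> W}"
    unfolding cylinder_open_def
  proof (intro ballI impI)
    fix x g assume x: "x \<in> GH0 G Q H" and g: "g \<in> carrier G"
      and "arr G x g \<in> {a \<in> GH_arrows G Q H. f a \<in> W}"
    then have "arr G (\<phi> g x) (\<psi> g) \<in> W" using f by simp
    then obtain M' where M': "\<forall>y\<in>GH0 G Q H. y M' = \<phi> g x M' \<longrightarrow> arr G y (\<psi> g) \<in> W"
      using W \<phi>[OF x g] \<psi>[OF g] unfolding cylinder_open_def by blast
    obtain M where M: "\<forall>y\<in>GH0 G Q H. y M = x M \<longrightarrow> \<phi> g y M' = \<phi> g x M'"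
      using local[OF x g] by blast
    show "\<exists>M. \<forall>y\<in>GH0 G Q H. y M = x M \<longrightarrow> arr G y g \<in> {a \<in> GH_arrows G Q H. f a \<in> W}"
    proof (intro exI[of _ M] ballI impI)
      fix y assume y: "y \<in> GH0 G Q H" "y M = x M"
      then have "arr G (\<phi> g y) (\<psi> g) \<in> W" using M M' \<phi>[OF y(1) g] by simp
      then show "arr G y g \<in> {a \<in> GH_arrows G Q H. f a \<in> W}"
        using f[OF y(1) g] arr_mem_GH_arrows[OF y(1) g] by simp
    qed
  qed
  then show "openin (GH_topology G Q H) {a \<in> GH_arrows G Q H. f a \<in> W}"
    unfolding openin_GH_topology_iff by blast
qed

lemma uact_eq_at:
  assumes x: "x \<in> GH0 G Q H" and y: "y \<in> GH0 G Q H" and g: "g \<in> carrier G"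
    and eq: "y (M + word_len G Q g) = x (M + word_len G Q g)"
  shows "uact G Q H g y M = uact G Q H g x M"
proof -
  have "h \<in> conj_sub G g (subgroup_of y) \<longleftrightarrow> h \<in> conj_sub G g (subgroup_of x)" if h: "h \<in> window M" for h
    using GH0_eq_at_subgroup_of[OF y x eq conj_in_window[OF g h]] window_closed h
      mem_conj_sub_iff[OF subgroup_of_closed g] by blast
  then show ?thesis
    unfolding GH0_eq_at_iff[OF uact_mem_GH0[OF y g] uact_mem_GH0[OF x g]] subgroup_of_uact[OF x g]
      subgroup_of_uact[OF y g] by blast
qed

lemma continuous_GH_inv: "continuous_map (GH_topology G Q H) (GH_topology G Q H) (GH_inv G Q H)"
proof (rule continuous_map_GH_topology[where \<phi> = "uact G Q H" and \<psi> = "m_inv G"])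
  show "\<exists>M. \<forall>y\<in>GH0 G Q H. y M = x M \<longrightarrow> uact G Q H g y M' = uact G Q H g x M'"
    if "x \<in> GH0 G Q H" "g \<in> carrier G" for x g M'
    using uact_eq_at[OF that(1) _ that(2)] by (intro exI[of _ "M' + word_len G Q g"]) simp
qed (simp_all add: GH_inv_arr uact_mem_GH0)

lemma continuous_GH_r: "continuous_map (GH_topology G Q H) (GH_topology G Q H) (GH_r G)"
proof (rule continuous_map_GH_topology[where \<phi> = "\<lambda>g x. x" and \<psi> = "\<lambda>g. \<one>"])
  show "\<exists>M. \<forall>y\<in>GH0 G Q H. y M = x M \<longrightarrow> y M' = x M'" for x :: "'g unit_pt" and M' :: nat
    by blast
qed (simp_all add: GH_r_arr)

lemma GH_basic_subset_open:
  assumes "openin (GH_topology G Q H) W" "x \<in> GH0 G Q H" "g \<in> carrier G" "arr G x g \<in> W"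
  obtains M where "\<And>N. M \<le> N \<Longrightarrow> GH_basic G Q H N (x N) g \<subseteq> W"
proof -
  obtain M where M: "\<forall>y\<in>GH0 G Q H. y M = x M \<longrightarrow> arr G y g \<in> W"
    using assms unfolding openin_GH_topology_iff cylinder_open_def by blast
  have "GH_basic G Q H N (x N) g \<subseteq> W" if "M \<le> N" for N
  proof
    fix b assume "b \<in> GH_basic G Q H N (x N) g"
    then obtain y where y: "y \<in> GH0 G Q H" "y N = x N" "b = arr G y g" by (rule GH_basicE)
    then show "b \<in> W" using M GH0_eq_at_mono[OF y(1) assms(2) y(2) that] by blast
  qed
  then show thesis using that by blast
qed

lemma GH_mult_mem_GH_basic:
  assumes "a \<in> GH_basic G Q H N c g" "b \<in> GH_basic G Q H N' c' h" "g \<in> carrier G" "h \<in> carrier G"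
    and "GH_s G Q H a = GH_r G b"
  shows "GH_mult G a b \<in> GH_basic G Q H N c (h \<otimes> g)"
proof -
  obtain x where x: "x \<in> GH0 G Q H" "x N = c" "a = arr G x g" using assms(1) by (rule GH_basicE)
  obtain y where y: "y \<in> GH0 G Q H" "b = arr G y h" using assms(2) by (rule GH_basicE)
  have "y = uact G Q H g x" using GH_s_eq_GH_r_iff[OF x(1) assms(3) y(1)] assms(5) x y by simp
  then show ?thesis using GH_mult_arr[OF x(1) assms(3,4)] arr_mem_GH_basic[OF x(1), of "h \<otimes> g" N] x y
    by simp
qed

lemma GH_mult_nbhds:
  assumes W: "openin (GH_topology G Q H) W" and ab: "a \<in> GH_arrows G Q H" "b \<in> GH_arrows G Q H"
    "GH_s G Q H a = GH_r G b" "GH_mult G a b \<in> W"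
  obtains U U' where "openin (GH_topology G Q H) U" "openin (GH_topology G Q H) U'" "a \<in> U" "b \<in> U'"
    "\<And>a' b'. a' \<in> U \<Longrightarrow> b' \<in> U' \<Longrightarrow> GH_s G Q H a' = GH_r G b' \<Longrightarrow> GH_mult G a' b' \<in> W"
proof -
  obtain x g h where x: "x \<in> GH0 G Q H" and gh: "g \<in> carrier G" "h \<in> carrier G"
    and a: "a = arr G x g" and b: "b = arr G (uact G Q H g x) h"
    using ab(1-3) by (rule composable_arrowsE)
  have "arr G x (h \<otimes> g) \<in> W" using ab(4) GH_mult_arr[OF x gh] a b by simp
  then obtain M where M: "\<And>N. M \<le> N \<Longrightarrow> GH_basic G Q H N (x N) (h \<otimes> g) \<subseteq> W"
    using GH_basic_subset_open[OF W x m_closed[OF gh(2,1)]] by blast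
  define N where "N = max M (word_len G Q g)"
  define N' where "N' = word_len G Q h"
  show thesis
  proof (rule that)
    show "openin (GH_topology G Q H) (GH_basic G Q H N (x N) g)"
      "openin (GH_topology G Q H) (GH_basic G Q H N' (uact G Q H g x N') h)"
      using openin_GH_basic[OF x gh(1)] openin_GH_basic[OF uact_mem_GH0[OF x gh(1)] gh(2)]
      unfolding N_def N'_def by simp_all
    show "a \<in> GH_basic G Q H N (x N) g" "b \<in> GH_basic G Q H N' (uact G Q H g x N') h"
      using a b arr_mem_GH_basic[OF x] arr_mem_GH_basic[OF uact_mem_GH0[OF x gh(1)]] by simp_all
  next
    fix a' b' assume "a' \<in> GH_basic G Q H N (x N) g" "b' \<in> GH_basic G Q H N' (uact G Q H g x N') h"
      "GH_s G Q H a' = GH_r G b'"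
    then have "GH_mult G a' b' \<in> GH_basic G Q H N (x N) (h \<otimes> g)"
      by (rule GH_mult_mem_GH_basic[OF _ _ gh])
    then show "GH_mult G a' b' \<in> W" using M[of N] N_def by auto
  qed
qed

lemma continuous_GH_mult:
  "continuous_map (subtopology (prod_topology (GH_topology G Q H) (GH_topology G Q H))
      (composable_pairs (topspace (GH_topology G Q H)) (GH_r G) (GH_s G Q H)))
    (GH_topology G Q H) (\<lambda>(a, b). GH_mult G a b)"
    (is "continuous_map (subtopology ?T2 ?C) ?T ?m")
proof -
  have C: "?C = {(a, b). a \<in> GH_arrows G Q H \<and> b \<in> GH_arrows G Q H \<and> GH_s G Q H a = GH_r G b}"
    unfolding composable_pairs_def topspace_GH_topology ..
  then have top: "topspace (subtopology ?T2 ?C) = ?C"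
    by (auto simp: topspace_subtopology topspace_prod_topology topspace_GH_topology)
  show ?thesis
    unfolding continuous_map top
  proof (intro conjI allI impI)
    have "GH_mult G a b \<in> GH_arrows G Q H" if "(a, b) \<in> ?C" for a b
      using groupoid_GH that unfolding C is_groupoid_def by blast
    then show "?m ` ?C \<subseteq> topspace ?T" by (auto simp: topspace_GH_topology)
    fix W assume W: "openin ?T W"
    show "openin (subtopology ?T2 ?C) {p \<in> ?C. ?m p \<in> W}"
      unfolding openin_subopen[of _ "{p \<in> ?C. ?m p \<in> W}"]
    proof (intro ballI)
      fix p assume p: "p \<in> {p \<in> ?C. ?m p \<in> W}"
      obtain a b where pab: "p = (a, b)" by (cases p)
      with p have ab: "a \<in> GH_arrows G Q H" "b \<in> GH_arrows G Q H" "GH_s G Q H a = GH_r G b"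
        "GH_mult G a b \<in> W"
        unfolding C by auto
      obtain U U' where UU': "openin ?T U" "openin ?T U'" "a \<in> U" "b \<in> U'"
        and mult: "\<And>a' b'. a' \<in> U \<Longrightarrow> b' \<in> U' \<Longrightarrow> GH_s G Q H a' = GH_r G b' \<Longrightarrow> GH_mult G a' b' \<in> W"
        using GH_mult_nbhds[OF W ab] by blast
      have "openin (subtopology ?T2 ?C) (?C \<inter> U \<times> U')"
        using UU' by (intro openin_subtopology_Int2) (simp add: openin_prod_Times_iff)
      moreover have "p \<in> ?C \<inter> U \<times> U'" using p pab UU' by simp
      moreover have "?C \<inter> U \<times> U' \<subseteq> {p \<in> ?C. ?m p \<in> W}"
      proof
        fix q assume q: "q \<in> ?C \<inter> U \<times> U'"
        obtain a' b' where "q = (a', b')" by (cases q)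
        then show "q \<in> {p \<in> ?C. ?m p \<in> W}" using q mult unfolding C by auto
      qed
      ultimately show "\<exists>T. openin (subtopology ?T2 ?C) T \<and> p \<in> T \<and> T \<subseteq> {p \<in> ?C. ?m p \<in> W}"
        by blast
    qed
  qed
qed

lemma disjnt_GH_basic:
  assumes "g \<in> carrier G" "h \<in> carrier G"
    and "\<And>z. z \<in> GH0 G Q H \<Longrightarrow> z N = c \<Longrightarrow> z N = c' \<Longrightarrow> inv g \<otimes> h \<notin> subgroup_of z"
  shows "disjnt (GH_basic G Q H N c g) (GH_basic G Q H N c' h)"
  unfolding disjnt_iff
proof
  fix e
  show "\<not> (e \<in> GH_basic G Q H N c g \<and> e \<in> GH_basic G Q H N c' h)"
  proof
    assume "e \<in> GH_basic G Q H N c g \<and> e \<in> GH_basic G Q H N c' h"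
    then obtain z z' where z: "z \<in> GH0 G Q H" "z N = c" "e = arr G z g"
      and z': "z' \<in> GH0 G Q H" "z' N = c'" "e = arr G z' h"
      by (auto elim!: GH_basicE)
    then have "z = z'" "inv g \<otimes> h \<in> subgroup_of z" using arr_eq_arr_iff[OF z(1) z'(1) assms(1,2)] by auto
    then show False using assms(3)[OF z(1,2)] z'(2) by simp
  qed
qed

lemma Hausdorff_GH_topology: "Hausdorff_space (GH_topology G Q H)"
  unfolding Hausdorff_space_def topspace_GH_topology
proof (intro allI impI)
  fix a b assume ab: "a \<in> GH_arrows G Q H \<and> b \<in> GH_arrows G Q H \<and> a \<noteq> b"
  obtain x g where x: "x \<in> GH0 G Q H" and g: "g \<in> carrier G" and a: "a = arr G x g"
    using ab by (auto elim: GH_arrowsE)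
  obtain y h where y: "y \<in> GH0 G Q H" and h: "h \<in> carrier G" and b: "b = arr G y h"
    using ab by (auto elim: GH_arrowsE)
  obtain f where f: "f \<in> carrier G"
    and sep: "(x = y \<and> f = inv g \<otimes> h \<and> f \<notin> subgroup_of x) \<or> (f \<in> subgroup_of x \<longleftrightarrow> f \<notin> subgroup_of y)"
  proof (cases "x = y")
    case True
    then show thesis using that[of "inv g \<otimes> h"] ab a b g h arr_eq_arr_iff[OF x y g h] by auto
  next
    case False
    then have "subgroup_of x \<noteq> subgroup_of y" using GH0_eq_iff[OF x y] by simp
    then show thesis using that subgroup_of_closed by blast
  qed
  define N where "N = max (word_len G Q f) (max (word_len G Q g) (word_len G Q h))"
  have "f \<in> window N" using in_window[OF f] N_def by simp
  then have "disjnt (GH_basic G Q H N (x N) g) (GH_basic G Q H N (y N) h)"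
    using sep GH0_eq_at_subgroup_of[OF _ x] GH0_eq_at_subgroup_of[OF _ y]
    by (intro disjnt_GH_basic[OF g h]) metis
  then show "\<exists>U V. openin (GH_topology G Q H) U \<and> openin (GH_topology G Q H) V \<and> a \<in> U \<and> b \<in> V \<and> disjnt U V"
    using openin_GH_basic[OF x g, of N] openin_GH_basic[OF y h, of N] arr_mem_GH_basic x y a b N_def
    by (intro exI conjI) auto
qed

lemma continuous_arr_fst:
  "g \<in> carrier G \<Longrightarrow> continuous_map (GH_topology G Q H) (GH_topology G Q H) (\<lambda>b. arr G (fst b) g)"
  by (rule continuous_map_GH_topology[where \<phi> = "\<lambda>h x. x" and \<psi> = "\<lambda>h. g"]) auto

lemma GH_r_image_GH_basic: "GH_r G ` GH_basic G Q H N c g = GH_basic G Q H N c \<one>"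
proof
  show "GH_r G ` GH_basic G Q H N c g \<subseteq> GH_basic G Q H N c \<one>"
    by (auto simp: GH_r_arr GH_basic_def)
  show "GH_basic G Q H N c \<one> \<subseteq> GH_r G ` GH_basic G Q H N c g"
  proof
    fix b assume "b \<in> GH_basic G Q H N c \<one>"
    then obtain y where "y \<in> GH0 G Q H" "y N = c" "b = arr G y \<one>" by (rule GH_basicE)
    then have "b = GH_r G (arr G y g)" "arr G y g \<in> GH_basic G Q H N c g"
      by (auto simp: GH_r_arr GH_basic_def)
    then show "b \<in> GH_r G ` GH_basic G Q H N c g" by blast
  qed
qed

lemma homeomorphic_map_GH_r_GH_basic:
  assumes g: "g \<in> carrier G"
  shows "homeomorphic_map (subtopology (GH_topology G Q H) (GH_basic G Q H N c g))
    (subtopology (GH_topology G Q H) (GH_basic G Q H N c \<one>)) (GH_r G)"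
  (is "homeomorphic_map (subtopology ?T ?V) (subtopology ?T ?V1) _")
proof -
  have lift: "arr G (fst b) g \<in> ?V" if b: "b \<in> ?V1" for b
  proof -
    obtain y where "y \<in> GH0 G Q H" "y N = c" "b = arr G y \<one>" using b by (rule GH_basicE)
    then show ?thesis using arr_mem_GH_basic[of y g N] by simp
  qed
  have range: "GH_r G b \<in> ?V1" if "b \<in> ?V" for b
    using imageI[OF that, of "GH_r G"] unfolding GH_r_image_GH_basic .
  have "homeomorphic_maps (subtopology ?T ?V) (subtopology ?T ?V1) (GH_r G) (\<lambda>b. arr G (fst b) g)"
    unfolding homeomorphic_maps_def
  proof (intro conjI ballI)
    show "continuous_map (subtopology ?T ?V) (subtopology ?T ?V1) (GH_r G)"
      by (rule continuous_map_into_subtopology[OF continuous_map_from_subtopology[OF continuous_GH_r]])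
        (use range in auto)
    show "continuous_map (subtopology ?T ?V1) (subtopology ?T ?V) (\<lambda>b. arr G (fst b) g)"
      by (rule continuous_map_into_subtopology[OF continuous_map_from_subtopology[OF continuous_arr_fst[OF g]]])
        (use lift in auto)
  next
    fix b assume "b \<in> topspace (subtopology ?T ?V)"
    then have "b \<in> ?V" by simp
    then obtain y where "b = arr G y g" by (rule GH_basicE)
    then show "arr G (fst (GH_r G b)) g = b" by (simp add: GH_r_arr)
  next
    fix b assume "b \<in> topspace (subtopology ?T ?V1)"
    then have "b \<in> ?V1" by simp
    then obtain y where "b = arr G y \<one>" by (rule GH_basicE)
    then show "GH_r G (arr G (fst b) g) = b" by (simp add: GH_r_arr)
  qed
  then show ?thesis by (rule homeomorphic_maps_imp_map)
qed

lemma etale_GH_r: "is_etale (GH_topology G Q H) (GH_r G)"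
  unfolding is_etale_def topspace_GH_topology
proof
  fix a assume "a \<in> GH_arrows G Q H"
  then obtain x g where x: "x \<in> GH0 G Q H" and g: "g \<in> carrier G" and a: "a = arr G x g"
    by (rule GH_arrowsE)
  define V where "V = GH_basic G Q H (word_len G Q g) (x (word_len G Q g)) g"
  have "openin (GH_topology G Q H) V" "a \<in> V"
    using openin_GH_basic[OF x g] arr_mem_GH_basic[OF x] a unfolding V_def by auto
  moreover have "openin (GH_topology G Q H) (GH_r G ` V)"
    unfolding V_def GH_r_image_GH_basic using openin_GH_basic[OF x one_closed] by (simp add: word_len_one)
  moreover have "homeomorphic_map (subtopology (GH_topology G Q H) V)
      (subtopology (GH_topology G Q H) (GH_r G ` V)) (GH_r G)"
    unfolding V_def GH_r_image_GH_basic by (rule homeomorphic_map_GH_r_GH_basic[OF g])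
  ultimately show "\<exists>V. openin (GH_topology G Q H) V \<and> a \<in> V \<and> openin (GH_topology G Q H) (GH_r G ` V) \<and>
      homeomorphic_map (subtopology (GH_topology G Q H) V) (subtopology (GH_topology G Q H) (GH_r G ` V)) (GH_r G)"
    by blast
qed

lemma openin_mem_subgroup_of:
  assumes "h \<in> carrier G"
  shows "openin (GH_topology G Q H) {a \<in> GH_arrows G Q H. (h \<in> subgroup_of (fst a)) = P}"
  unfolding openin_GH_topology_iff cylinder_open_def
proof (intro conjI ballI impI)
  fix x g assume x: "x \<in> GH0 G Q H" and g: "g \<in> carrier G"
    and "arr G x g \<in> {a \<in> GH_arrows G Q H. (h \<in> subgroup_of (fst a)) = P}"
  then have P: "(h \<in> subgroup_of x) = P" by simp
  show "\<exists>M. \<forall>y\<in>GH0 G Q H. y M = x M \<longrightarrow> arr G y g \<in> {a \<in> GH_arrows G Q H. (h \<in> subgroup_of (fst a)) = P}"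
  proof (intro exI[of _ "word_len G Q h"] ballI impI)
    fix y assume y: "y \<in> GH0 G Q H" "y (word_len G Q h) = x (word_len G Q h)"
    then have "(h \<in> subgroup_of y) = P"
      using GH0_eq_at_subgroup_of[OF y(1) x y(2) in_window[OF assms order_refl]] P by simp
    then show "arr G y g \<in> {a \<in> GH_arrows G Q H. (h \<in> subgroup_of (fst a)) = P}"
      using arr_mem_GH_arrows[OF y(1) g] by simp
  qed
qed blast

lemma totally_disconnected_GH_units:
  "totally_disconnected_space (subtopology (GH_topology G Q H) (GH_units G Q H))"
  unfolding totally_disconnected_space_def
proof (intro allI impI ballI)
  fix C u v assume C: "connectedin (subtopology (GH_topology G Q H) (GH_units G Q H)) C"
    and u: "u \<in> C" and v: "v \<in> C"
  have CU: "C \<subseteq> GH_units G Q H"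
    using connectedin_subset_topspace[OF C] by simp
  obtain x y where x: "x \<in> GH0 G Q H" "u = arr G x \<one>" and y: "y \<in> GH0 G Q H" "v = arr G y \<one>"
    using u v CU unfolding GH_units_def by blast
  show "u = v"
  proof (rule ccontr)
    assume "u \<noteq> v"
    then have "subgroup_of x \<noteq> subgroup_of y" using GH0_eq_iff[OF x(1) y(1)] x y by auto
    then obtain f where f: "f \<in> carrier G" "f \<in> subgroup_of x \<longleftrightarrow> f \<notin> subgroup_of y"
      using subgroup_of_closed by blast
    define E where "E P = GH_units G Q H \<inter> {a \<in> GH_arrows G Q H. (f \<in> subgroup_of (fst a)) = P}" for P
    have "openin (subtopology (GH_topology G Q H) (GH_units G Q H)) (E P)" for P
      unfolding E_def by (rule openin_subtopology_Int2[OF openin_mem_subgroup_of[OF f(1)]])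
    moreover have "C \<subseteq> E True \<union> E False" "E True \<inter> E False \<inter> C = {}"
      using CU GH_units_closed unfolding E_def by auto
    moreover have "u \<in> E (f \<in> subgroup_of x)" "v \<in> E (f \<in> subgroup_of y)"
      using x y u v CU GH_units_closed unfolding E_def by auto
    then have "E True \<inter> C \<noteq> {} \<and> E False \<inter> C \<noteq> {}"
      using f(2) u v by (cases "f \<in> subgroup_of x") auto
    ultimately show False using C unfolding connectedin by blast
  qed
qed

end

section \<open>The space of subgroups and the recurrent subgroup Z\<close>

context generated_group
begin

lemma topspace_Sub_topology: "topspace (Sub_topology G) = Sub G"
proof -
  have "K \<in> {K' \<in> Sub G. \<one> \<in> K'}" if "K \<in> Sub G" for K
    using that subgroup.one_closed unfolding Sub_def by blast
  then show ?thesis unfolding Sub_topology_def by auto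
qed

lemma openin_Sub_eq_on:
  assumes "finite F" "F \<subseteq> carrier G"
  shows "openin (Sub_topology G) {K' \<in> Sub G. K' \<inter> F = K \<inter> F}"
  using assms
proof (induction F rule: finite_induct)
  case empty
  have "{K' \<in> Sub G. K' \<inter> {} = K \<inter> {}} = topspace (Sub_topology G)" using topspace_Sub_topology by simp
  then show ?case by simp
next
  case (insert f F)
  define B where "B = (if f \<in> K then {K' \<in> Sub G. f \<in> K'} else {K' \<in> Sub G. f \<notin> K'})"
  have "openin (Sub_topology G) B"
    unfolding Sub_topology_def B_def using insert.prems
    by (intro topology_generated_by_Basis) auto
  moreover have "{K' \<in> Sub G. K' \<inter> insert f F = K \<inter> insert f F} = {K' \<in> Sub G. K' \<inter> F = K \<inter> F} \<inter> B"
    unfolding B_def by auto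
  ultimately show ?case using openin_Int insert by simp
qed

lemma openin_Sub_eq_on_window: "openin (Sub_topology G) {K' \<in> Sub G. K' \<inter> window n = K \<inter> window n}"
  by (rule openin_Sub_eq_on[OF finite_window window_closed])

definition window_open :: "'g set set \<Rightarrow> bool"
  where "window_open W \<longleftrightarrow> (\<forall>K\<in>W. \<exists>n. \<forall>K'\<in>Sub G. K' \<inter> window n = K \<inter> window n \<longrightarrow> K' \<in> W)"

lemma window_open_Int:
  assumes "window_open V" "window_open W"
  shows "window_open (V \<inter> W)"
  unfolding window_open_def
proof
  fix K assume K: "K \<in> V \<inter> W"
  obtain m where m: "\<forall>K'\<in>Sub G. K' \<inter> window m = K \<inter> window m \<longrightarrow> K' \<in> V"
    using assms(1) K unfolding window_open_def by blast
  obtain n where n: "\<forall>K'\<in>Sub G. K' \<inter> window n = K \<inter> window n \<longrightarrow> K' \<in> W"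
    using assms(2) K unfolding window_open_def by blast
  show "\<exists>k. \<forall>K'\<in>Sub G. K' \<inter> window k = K \<inter> window k \<longrightarrow> K' \<in> V \<inter> W"
  proof (intro exI[of _ "max m n"] ballI impI)
    fix K' assume K': "K' \<in> Sub G" "K' \<inter> window (max m n) = K \<inter> window (max m n)"
    then have "K' \<inter> window m = K \<inter> window m" "K' \<inter> window n = K \<inter> window n"
      using window_mono[of m "max m n"] window_mono[of n "max m n"] by auto
    then show "K' \<in> V \<inter> W" using m n K'(1) by blast
  qed
qed

lemma window_open_if_openin:
  assumes "openin (Sub_topology G) W"
  shows "window_open W"
proof -
  have "generate_topology_on ({{K \<in> Sub G. g \<in> K} | g. g \<in> carrier G} \<union>
      {{K \<in> Sub G. g \<notin> K} | g. g \<in> carrier G}) W"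
    using assms unfolding Sub_topology_def openin_topology_generated_by_iff .
  then show ?thesis
  proof (induction rule: generate_topology_on.induct)
    case Empty
    then show ?case unfolding window_open_def by simp
  next
    case (Int V W)
    then show ?case using window_open_Int by blast
  next
    case (UN \<K>)
    show ?case unfolding window_open_def
    proof
      fix K assume "K \<in> \<Union>\<K>"
      then obtain V where V: "V \<in> \<K>" "K \<in> V" by blast
      then obtain n where "\<forall>K'\<in>Sub G. K' \<inter> window n = K \<inter> window n \<longrightarrow> K' \<in> V"
        using UN.IH unfolding window_open_def by blast
      then show "\<exists>n. \<forall>K'\<in>Sub G. K' \<inter> window n = K \<inter> window n \<longrightarrow> K' \<in> \<Union>\<K>" using V(1) by blast
    qed
  next
    case (Basis V)
    then obtain g where g: "g \<in> carrier G" "V = {K \<in> Sub G. g \<in> K} \<or> V = {K \<in> Sub G. g \<notin> K}"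
      by blast
    have gw: "g \<in> window (word_len G Q g)" using in_window[OF g(1) order_refl] .
    show ?case unfolding window_open_def
    proof (intro ballI exI[of _ "word_len G Q g"] impI)
      fix K K' assume "K \<in> V" "K' \<in> Sub G" "K' \<inter> window (word_len G Q g) = K \<inter> window (word_len G Q g)"
      moreover have "g \<in> K' \<longleftrightarrow> g \<in> K" using calculation(3) gw by blast
      ultimately show "K' \<in> V" using g(2) by auto
    qed
  qed
qed

end


locale urs_groupoid = schreier_groupoid G Q H for G :: "('g, 'b) monoid_scheme" (structure) and Q H +
  fixes Z :: "'g set set"
  assumes URS_Z: "is_URS G Z" and H_in_Z: "H \<in> Z"
begin

lemma Z_subset_Sub: "Z \<subseteq> Sub G"
  using URS_Z unfolding is_URS_def by blast

lemma subgroup_Z: "K \<in> Z \<Longrightarrow> subgroup K G"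
  using Z_subset_Sub unfolding Sub_def by blast

lemma closure_conj_orbit: "K \<in> Z \<Longrightarrow> Sub_topology G closure_of {conj_sub G g K | g. g \<in> carrier G} = Z"
  using URS_Z unfolding is_URS_def by blast

lemma conj_sub_approx:
  assumes "K \<in> Z" "K' \<in> Z"
  obtains g where "g \<in> carrier G" "conj_sub G g K' \<inter> window n = K \<inter> window n"
proof -
  have "K \<in> Sub_topology G closure_of {conj_sub G g K' | g. g \<in> carrier G}"
    using closure_conj_orbit[OF assms(2)] assms(1) by simp
  then have closure: "\<forall>T. K \<in> T \<and> openin (Sub_topology G) T \<longrightarrow>
      (\<exists>L. L \<in> {conj_sub G g K' | g. g \<in> carrier G} \<and> L \<in> T)"
    unfolding in_closure_of by (elim conjE)
  have "K \<in> {L \<in> Sub G. L \<inter> window n = K \<inter> window n}" using assms(1) Z_subset_Sub by blast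
  then have "\<exists>L. L \<in> {conj_sub G g K' | g. g \<in> carrier G} \<and> L \<in> {L \<in> Sub G. L \<inter> window n = K \<inter> window n}"
    using closure[rule_format, OF conjI[OF _ openin_Sub_eq_on_window]] by blast
  then show thesis using that by auto
qed

lemma realizable_Z: "K \<in> Z \<Longrightarrow> realizable K"
  unfolding realizable_def
proof
  fix n assume "K \<in> Z"
  then obtain g where g: "g \<in> carrier G" "conj_sub G g H \<inter> window n = K \<inter> window n"
    using conj_sub_approx H_in_Z by blast
  then have "trace n (g <# H) = K \<inter> window n"
    unfolding trace_def set_stabilizer_l_coset[OF subgroup_H g(1)] by simp
  moreover have "g <# H \<in> schreier_vertices G H" unfolding schreier_vertices_def using g by blast
  ultimately show "\<exists>p\<in>schreier_vertices G H. trace n p = K \<inter> window n" by blast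
qed

lemma
  assumes "K \<in> Z"
  shows unit_of_Z: "unit_of K \<in> GH0 G Q H"
    and subgroup_of_unit_of_Z: "subgroup_of (unit_of K) = K"
  using unit_of_mem_GH0 subgroup_of_unit_of subgroup.subset[OF subgroup_Z[OF assms]] realizable_Z[OF assms] by blast+

lemma subgroup_of_mem_Z:
  assumes x: "x \<in> GH0 G Q H"
  shows "subgroup_of x \<in> Z"
proof -
  have "subgroup_of x \<in> Sub_topology G closure_of {conj_sub G g H | g. g \<in> carrier G}"
    unfolding in_closure_of
  proof (intro conjI allI impI)
    show "subgroup_of x \<in> topspace (Sub_topology G)"
      unfolding topspace_Sub_topology Sub_def using subgroup_subgroup_of[OF x] by simp
    fix W assume W: "subgroup_of x \<in> W \<and> openin (Sub_topology G) W"
    then have "window_open W" using window_open_if_openin by blast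
    then obtain n where n: "\<forall>K'\<in>Sub G. K' \<inter> window n = subgroup_of x \<inter> window n \<longrightarrow> K' \<in> W"
      using W unfolding window_open_def by blast
    obtain g where g: "g \<in> carrier G" "pick x n = g <# H"
      using pick_mem(2)[OF x] unfolding schreier_vertices_def by blast
    have "conj_sub G g H \<inter> window n = subgroup_of x \<inter> window n"
      using subgroup_of_Int_window[OF x, of n]
      unfolding trace_def g(2) set_stabilizer_l_coset[OF subgroup_H g(1)] by simp
    moreover have "conj_sub G g H \<in> Sub G"
      using subgroup_set_stabilizer[OF l_coset_subset_G[OF subgroup.subset[OF subgroup_H] g(1)]]
        set_stabilizer_l_coset[OF subgroup_H g(1)] unfolding Sub_def by simp
    ultimately have "conj_sub G g H \<in> W" using n by blast
    then show "\<exists>L. L \<in> {conj_sub G g H | g. g \<in> carrier G} \<and> L \<in> W" using g(1) by blast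
  qed
  then show ?thesis using closure_conj_orbit[OF H_in_Z] by simp
qed

lemma topspace_units: "topspace (subtopology (GH_topology G Q H) (GH_units G Q H)) = GH_units G Q H"
  using GH_units_closed topspace_GH_topology by auto

lemma continuous_subgroup_of_units:
  "continuous_map (subtopology (GH_topology G Q H) (GH_units G Q H)) (subtopology (Sub_topology G) Z)
    (\<lambda>u. subgroup_of (fst u))"
proof -
  have Z: "subgroup_of (fst u) \<in> Z" if "u \<in> GH_units G Q H" for u
    using that subgroup_of_mem_Z unfolding GH_units_def by auto
  have "continuous_map (subtopology (GH_topology G Q H) (GH_units G Q H)) (Sub_topology G)
      (\<lambda>u. subgroup_of (fst u))"
    unfolding Sub_topology_def
  proof (rule continuous_on_generated_topo)
    fix S assume "S \<in> {{K \<in> Sub G. h \<in> K} | h. h \<in> carrier G} \<union> {{K \<in> Sub G. h \<notin> K} | h. h \<in> carrier G}"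
    then obtain h where h: "h \<in> carrier G" "S = {K \<in> Sub G. h \<in> K} \<or> S = {K \<in> Sub G. h \<notin> K}"
      by blast
    have "\<exists>P. S = {K \<in> Sub G. (h \<in> K) = P}"
    proof (cases "S = {K \<in> Sub G. h \<in> K}")
      case True then show ?thesis by (intro exI[of _ True]) simp
    next
      case False then show ?thesis using h(2) by (intro exI[of _ False]) simp
    qed
    then obtain P where S: "S = {K \<in> Sub G. (h \<in> K) = P}" by blast
    have "(\<lambda>u. subgroup_of (fst u)) -` S \<inter> GH_units G Q H =
        GH_units G Q H \<inter> {a \<in> GH_arrows G Q H. (h \<in> subgroup_of (fst a)) = P}"
      using Z Z_subset_Sub GH_units_closed unfolding S by auto
    then show "openin (subtopology (GH_topology G Q H) (GH_units G Q H))
        ((\<lambda>u. subgroup_of (fst u)) -` S \<inter> topspace (subtopology (GH_topology G Q H) (GH_units G Q H)))"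
      unfolding topspace_units using openin_subtopology_Int2[OF openin_mem_subgroup_of[OF h(1)]] by simp
  next
    show "(\<lambda>u. subgroup_of (fst u)) ` topspace (subtopology (GH_topology G Q H) (GH_units G Q H)) \<subseteq>
        \<Union> ({{K \<in> Sub G. h \<in> K} | h. h \<in> carrier G} \<union> {{K \<in> Sub G. h \<notin> K} | h. h \<in> carrier G})"
      using Z Z_subset_Sub topspace_Sub_topology unfolding topspace_units Sub_topology_def by auto
  qed
  then show ?thesis using Z by (auto simp: continuous_map_in_subtopology topspace_units)
qed

lemma continuous_unit_of_Z:
  "continuous_map (subtopology (Sub_topology G) Z) (subtopology (GH_topology G Q H) (GH_units G Q H))
    (\<lambda>K. arr G (unit_of K) \<one>)"
proof -
  have topZ: "topspace (subtopology (Sub_topology G) Z) = Z"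
    using Z_subset_Sub topspace_Sub_topology by auto
  have units: "arr G (unit_of K) \<one> \<in> GH_units G Q H" if "K \<in> Z" for K
    using unit_of_Z[OF that] unfolding GH_units_def by blast
  have "continuous_map (subtopology (Sub_topology G) Z) (GH_topology G Q H) (\<lambda>K. arr G (unit_of K) \<one>)"
    unfolding continuous_map topZ
  proof (intro conjI allI impI)
    show "(\<lambda>K. arr G (unit_of K) \<one>) ` Z \<subseteq> topspace (GH_topology G Q H)"
      using units GH_units_closed topspace_GH_topology by auto
    fix W assume W: "openin (GH_topology G Q H) W"
    show "openin (subtopology (Sub_topology G) Z) {K \<in> Z. arr G (unit_of K) \<one> \<in> W}"
      unfolding openin_subopen[of _ "{K \<in> Z. arr G (unit_of K) \<one> \<in> W}"]
    proof
      fix K assume K: "K \<in> {K \<in> Z. arr G (unit_of K) \<one> \<in> W}"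
      then obtain M where M: "\<forall>y\<in>GH0 G Q H. y M = unit_of K M \<longrightarrow> arr G y \<one> \<in> W"
        using W unit_of_Z unfolding openin_GH_topology_iff cylinder_open_def by blast
      define T where "T = Z \<inter> {K' \<in> Sub G. K' \<inter> window M = K \<inter> window M}"
      have "openin (subtopology (Sub_topology G) Z) T"
        unfolding T_def by (rule openin_subtopology_Int2[OF openin_Sub_eq_on_window])
      moreover have "K \<in> T" unfolding T_def using K Z_subset_Sub by blast
      moreover have "T \<subseteq> {K \<in> Z. arr G (unit_of K) \<one> \<in> W}"
      proof
        fix K' assume "K' \<in> T"
        then have K': "K' \<in> Z" "K' \<inter> window M = K \<inter> window M" unfolding T_def by auto
        then have "unit_of K' M = unit_of K M"
          using GH0_eq_at_iff[OF unit_of_Z[OF K'(1)] unit_of_Z] subgroup_of_unit_of_Z K by simp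
        then show "K' \<in> {K \<in> Z. arr G (unit_of K) \<one> \<in> W}" using M unit_of_Z K'(1) by simp
      qed
      ultimately show "\<exists>T. openin (subtopology (Sub_topology G) Z) T \<and> K \<in> T \<and>
          T \<subseteq> {K \<in> Z. arr G (unit_of K) \<one> \<in> W}" by blast
    qed
  qed
  then show ?thesis using units topZ by (auto simp: continuous_map_in_subtopology)
qed

lemma homeomorphic_units_Z:
  "subtopology (GH_topology G Q H) (GH_units G Q H) homeomorphic_space subtopology (Sub_topology G) Z"
  unfolding homeomorphic_space_def homeomorphic_maps_def
proof (intro exI conjI ballI)
  show "continuous_map (subtopology (GH_topology G Q H) (GH_units G Q H)) (subtopology (Sub_topology G) Z)
      (\<lambda>u. subgroup_of (fst u))"
    by (rule continuous_subgroup_of_units)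
  show "continuous_map (subtopology (Sub_topology G) Z) (subtopology (GH_topology G Q H) (GH_units G Q H))
      (\<lambda>K. arr G (unit_of K) \<one>)"
    by (rule continuous_unit_of_Z)
next
  fix u assume "u \<in> topspace (subtopology (GH_topology G Q H) (GH_units G Q H))"
  then have "u \<in> GH_units G Q H" unfolding topspace_units .
  then obtain x where "x \<in> GH0 G Q H" "u = arr G x \<one>" unfolding GH_units_def by blast
  then show "arr G (unit_of (subgroup_of (fst u))) \<one> = u" using unit_of_subgroup_of by simp
next
  fix K assume "K \<in> topspace (subtopology (Sub_topology G) Z)"
  then have "K \<in> Z" by simp
  then show "subgroup_of (fst (arr G (unit_of K) \<one>)) = K" using subgroup_of_unit_of_Z by simp
qed

lemma minimal_groupoid_GH: "is_minimal_groupoid (GH_topology G Q H) (GH_units G Q H) (GH_r G) (GH_s G Q H)"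
  unfolding is_minimal_groupoid_def
proof
  fix u assume "u \<in> GH_units G Q H"
  then obtain x where x: "x \<in> GH0 G Q H" "u = arr G x \<one>" unfolding GH_units_def by blast
  define orbit where "orbit = {GH_s G Q H a | a. a \<in> topspace (GH_topology G Q H) \<and> GH_r G a = u}"
  have "GH_units G Q H \<subseteq> subtopology (GH_topology G Q H) (GH_units G Q H) closure_of orbit"
  proof
    fix v assume v: "v \<in> GH_units G Q H"
    then obtain y where y: "y \<in> GH0 G Q H" "v = arr G y \<one>" unfolding GH_units_def by blast
    show "v \<in> subtopology (GH_topology G Q H) (GH_units G Q H) closure_of orbit"
      unfolding in_closure_of topspace_units
    proof (intro conjI allI impI)
      fix T assume T: "v \<in> T \<and> openin (subtopology (GH_topology G Q H) (GH_units G Q H)) T"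
      then obtain W where W: "openin (GH_topology G Q H) W" "T = W \<inter> GH_units G Q H"
        unfolding openin_subtopology by blast
      then obtain M where M: "\<forall>y'\<in>GH0 G Q H. y' M = y M \<longrightarrow> arr G y' \<one> \<in> W"
        using T y unfolding openin_GH_topology_iff cylinder_open_def by blast
      obtain g where g: "g \<in> carrier G" "conj_sub G g (subgroup_of x) \<inter> window M = subgroup_of y \<inter> window M"
        using conj_sub_approx[OF subgroup_of_mem_Z[OF y(1)] subgroup_of_mem_Z[OF x(1)]] by blast
      define y' where "y' = uact G Q H g x"
      have y': "y' \<in> GH0 G Q H" "y' M = y M"
        using uact_mem_GH0[OF x(1) g(1)] GH0_eq_at_iff[OF _ y(1)] subgroup_of_uact[OF x(1) g(1)] g(2)
        unfolding y'_def by simp_all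
      have "arr G x g \<in> topspace (GH_topology G Q H)" "GH_r G (arr G x g) = u"
        "GH_s G Q H (arr G x g) = arr G y' \<one>"
        using arr_mem_GH_arrows[OF x(1) g(1)] topspace_GH_topology GH_r_arr x(2) GH_s_arr[OF x(1) g(1)]
        unfolding y'_def by simp_all
      then have "arr G y' \<one> \<in> orbit" unfolding orbit_def by (intro CollectI exI[of _ "arr G x g"]) simp
      moreover have "arr G y' \<one> \<in> T" using M y' W(2) unfolding GH_units_def by blast
      ultimately show "\<exists>w. w \<in> orbit \<and> w \<in> T" by blast
    qed (use v in simp)
  qed
  then show "subtopology (GH_topology G Q H) (GH_units G Q H) closure_of orbit = GH_units G Q H"
    using closure_of_subset_topspace topspace_units by (metis subset_antisym)
qed

end

theorem proposition3p1:
  fixes G :: "('g, 'b) monoid_scheme" and Q :: "'g set" and Z :: "'g set set" and H :: "'g set"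
  assumes "group G"
    and "finite Q" and "Q \<subseteq> carrier G" and "\<forall>q\<in>Q. inv\<^bsub>G\<^esub> q \<in> Q"
    and "generate G Q = carrier G"
    and "is_URS G Z" and "H \<in> Z"
  shows "topspace (GH_topology G Q H) = GH_arrows G Q H
    \<and> is_topological_groupoid (GH_topology G Q H) (GH_units G Q H)
         (GH_r G) (GH_s G Q H) (GH_mult G) (GH_inv G Q H)
    \<and> is_ample (GH_topology G Q H) (GH_units G Q H) (GH_r G)
    \<and> is_minimal_groupoid (GH_topology G Q H) (GH_units G Q H) (GH_r G) (GH_s G Q H)
    \<and> Hausdorff_space (GH_topology G Q H)
    \<and> is_etale (GH_topology G Q H) (GH_r G)
    \<and> (subtopology (GH_topology G Q H) (GH_units G Q H)) homeomorphic_space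
        (subtopology (Sub_topology G) Z)"
proof -
  have "subgroup H G" using assms(6,7) unfolding is_URS_def Sub_def by blast
  then interpret urs_groupoid G Q H Z
    by (simp add: urs_groupoid_def urs_groupoid_axioms_def schreier_groupoid_def
        schreier_groupoid_axioms_def generated_group_def generated_group_axioms_def assms)
  show ?thesis
    unfolding is_topological_groupoid_def is_ample_def topspace_GH_topology
    using groupoid_GH continuous_GH_mult[unfolded topspace_GH_topology] continuous_GH_inv
      etale_GH_r totally_disconnected_GH_units minimal_groupoid_GH Hausdorff_GH_topology homeomorphic_units_Z
    by simp
qed

end
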